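(* Fix a constant $c>0$ and a sequence of finite $d$-regular graphs $(G_d)_{d\in\mathbb{N}}$; let $p=c/d$ and let $G_{d,p}$ be the random spanning subgraph of $G_d$ obtained by retaining each edge independently with probability $p$. Then for every $r\in\mathbb{N}$, for every sufficiently large $d\in\mathbb{N}$ and every vertex $u$ of $G_d$, $$d_{\mathrm{TV}}\big(B^r_{G_{d,p}}[u],\ \mathrm{GW}^r_c\big)\le (\log d)^r d^{-1/2},$$ where the total variation distance is between the laws of these random rooted graphs (up to rooted isomorphism).
   Context: For a graph $H$, a vertex $v$ and $r\ge0$, $B^r_H[v]$ is the subgraph of $H$ induced by the vertices at distance at most $r$ from $v$, rooted at $v$. $\mathrm{GW}_c$ is the Galton–Watson tree rooted at $o$ with offspring distribution $\mathrm{Po}(c)$, and $\mathrm{GW}^r_c$ is its subtree induced by the vertices at distance at most $r$ from $o$, rooted at $o$. For distributions $\mu_1,\mu_2$ on a countable set, $d_{\mathrm{TV}}(\mu_1,\mu_2)=\frac12\sum_\omega|\mu_1(\omega)-\mu_2(\omega)|$. Logarithms are natural. *)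

theory Defs
  imports "HOL-Probability.Probability"
begin

definition simple_graph :: "'a set \<Rightarrow> 'a set set \<Rightarrow> bool" where
  "simple_graph V E \<longleftrightarrow> finite V \<and>
     (\<forall>e\<in>E. \<exists>x y. x \<noteq> y \<and> x \<in> V \<and> y \<in> V \<and> e = {x, y})"

definition regular :: "'a set \<Rightarrow> 'a set set \<Rightarrow> nat \<Rightarrow> bool" where
  "regular V E d \<longleftrightarrow> (\<forall>v\<in>V. card {e\<in>E. v \<in> e} = d)"

type_synonym 'a rgraph = "'a set \<times> 'a set set \<times> 'a"

definition rooted_iso :: "'a rgraph \<Rightarrow> 'b rgraph \<Rightarrow> bool" where
  "rooted_iso G H \<longleftrightarrow> (case G of (V, E, o1) \<Rightarrow> case H of (V', E', o2) \<Rightarrow>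
     \<exists>f. bij_betw f V V' \<and> f o1 = o2 \<and> E' = (\<lambda>e. f ` e) ` E)"

(* rooted isomorphism class, represented as the set of all rooted graphs on nat
   rooted-isomorphic to G (a common countable outcome space for all laws) *)
definition rclass :: "'a rgraph \<Rightarrow> nat rgraph set" where
  "rclass G = {H. rooted_iso G H}"

inductive walk :: "'a set set \<Rightarrow> nat \<Rightarrow> 'a \<Rightarrow> 'a \<Rightarrow> bool" for E where
  walk0: "walk E 0 u u"
| walkS: "walk E k u v \<Longrightarrow> {v, w} \<in> E \<Longrightarrow> walk E (Suc k) u w"

definition ball :: "'a set \<Rightarrow> 'a set set \<Rightarrow> 'a \<Rightarrow> nat \<Rightarrow> 'a rgraph" where
  "ball V E u r = (let B = {v\<in>V. \<exists>k\<le>r. walk E k u v} in (B, {e\<in>E. e \<subseteq> B}, u))"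

definition percolation :: "'a set set \<Rightarrow> real \<Rightarrow> 'a set set pmf" where
  "percolation E p = map_pmf (\<lambda>f. {e\<in>E. f e}) (Pi_pmf E False (\<lambda>_. bernoulli_pmf p))"

(* Galton-Watson tree with Po(c) offspring, truncated at depth r, as a random set of
   Ulam-Harris words (prefix-closed; children of the root are [i], i < N) *)
fun gw_words :: "real \<Rightarrow> nat \<Rightarrow> nat list set pmf" where
  "gw_words c 0 = return_pmf {[]}"
| "gw_words c (Suc r) =
     bind_pmf (poisson_pmf c) (\<lambda>n.
       map_pmf (\<lambda>S. insert [] (\<Union>i<n. (\<lambda>w. i # w) ` S i))
         (Pi_pmf {..<n} {} (\<lambda>_. gw_words c r)))"

definition word_tree :: "nat list set \<Rightarrow> nat list rgraph" where
  "word_tree S = (S, {{butlast w, w} | w. w \<in> S \<and> w \<noteq> []}, [])"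

definition GW_trunc :: "real \<Rightarrow> nat \<Rightarrow> nat list rgraph pmf" where
  "GW_trunc c r = map_pmf word_tree (gw_words c r)"

definition dTV :: "'a pmf \<Rightarrow> 'a pmf \<Rightarrow> real" where
  "dTV \<mu> \<nu> = (1/2) * (\<Sum>\<^sub>\<infinity>\<omega>. \<bar>pmf \<mu> \<omega> - pmf \<nu> \<omega>\<bar>)"

end

(*
  Realise the Galton-Watson tree as a random set W of Ulam-Harris words; its law is
  P(W) = prod over inner nodes x of Po(c)(n_x), with n_x the number of children of x.
  For a tree W with |W|^2 small compared to d and an ordered embedding phi of W into G_d rooted
  at u, consider the event that among the edges at images of inner nodes and the edges spanned
  by phi(W), exactly the tree edges are retained.  On this event the r-ball of u is isomorphic
  to W, and different pairs (W, phi) give disjoint events.  There are at least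
  prod_x binom(d - |W|, n_x) ordered embeddings and each event has probability at least
  p^(|W| - 1) (1 - p)^(d #inner + |W|^2), so with p = c/d their total probability is at least
  P(W) (1 - O(|W|^2 / d)).  Hence d_TV is at most the missing mass O(E 4^|W| / d) = O(1/d),
  which is eventually below (log d)^r d^(-1/2).
*)
theory Submission
  imports Defs
begin

section \<open>Galton-Watson trees as sets of Ulam-Harris words\<close>

definition n_children :: "nat list set \<Rightarrow> nat list \<Rightarrow> nat" where
  "n_children W x = card {j. x @ [j] \<in> W}"

definition ulam_tree :: "nat \<Rightarrow> nat list set \<Rightarrow> bool" where
  "ulam_tree r W \<longleftrightarrow> finite W \<and> [] \<in> W \<and> (\<forall>w\<in>W. length w \<le> r) \<and>
     (\<forall>w\<in>W. w \<noteq> [] \<longrightarrow> butlast w \<in> W) \<and>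
     (\<forall>x\<in>W. {j. x @ [j] \<in> W} = {..<n_children W x})"

definition inner_nodes :: "nat \<Rightarrow> nat list set \<Rightarrow> nat list set" where
  "inner_nodes r W = {x\<in>W. length x < r}"

definition graft :: "nat \<Rightarrow> (nat \<Rightarrow> nat list set) \<Rightarrow> nat list set" where
  "graft n S = insert [] (\<Union>i<n. (\<lambda>w. i # w) ` S i)"

lemma n_children_eqI: "{j. x @ [j] \<in> W} = {..<m} \<Longrightarrow> n_children W x = m"
  by (simp add: n_children_def)

lemma ulam_tree_finite: "ulam_tree r W \<Longrightarrow> finite W"
  by (simp add: ulam_tree_def)

lemma ulam_tree_Nil: "ulam_tree r W \<Longrightarrow> [] \<in> W"
  by (simp add: ulam_tree_def)

lemma ulam_tree_length: "ulam_tree r W \<Longrightarrow> w \<in> W \<Longrightarrow> length w \<le> r"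
  by (simp add: ulam_tree_def)

lemma ulam_tree_butlast: "ulam_tree r W \<Longrightarrow> w \<in> W \<Longrightarrow> w \<noteq> [] \<Longrightarrow> butlast w \<in> W"
  by (simp add: ulam_tree_def)

lemma ulam_tree_snocD: "ulam_tree r W \<Longrightarrow> x @ [j] \<in> W \<Longrightarrow> x \<in> W"
  using ulam_tree_butlast[of r W "x @ [j]"] by simp

lemma ulam_tree_snoc_iff: "ulam_tree r W \<Longrightarrow> x \<in> W \<Longrightarrow> x @ [j] \<in> W \<longleftrightarrow> j < n_children W x"
  by (auto simp: ulam_tree_def)

lemma inner_nodes_iff [simp]: "x \<in> inner_nodes r W \<longleftrightarrow> x \<in> W \<and> length x < r"
  by (simp add: inner_nodes_def)

lemma finite_inner_nodes: "ulam_tree r W \<Longrightarrow> finite (inner_nodes r W)"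
  by (simp add: inner_nodes_def ulam_tree_finite)

lemma graft_Cons_iff [simp]: "i # x \<in> graft n S \<longleftrightarrow> i < n \<and> x \<in> S i"
  by (auto simp: graft_def)

lemma Nil_in_graft [simp]: "[] \<in> graft n S"
  by (simp add: graft_def)

lemma gw_words_Suc_graft:
  "gw_words c (Suc r) =
     bind_pmf (poisson_pmf c) (\<lambda>n. map_pmf (graft n) (Pi_pmf {..<n} {} (\<lambda>_. gw_words c r)))"
  by (simp add: graft_def[abs_def])

lemma set_pmf_gw_words_Suc:
  assumes "c > 0"
  shows "W \<in> set_pmf (gw_words c (Suc r)) \<longleftrightarrow>
    (\<exists>n S. W = graft n S \<and> (\<forall>i<n. S i \<in> set_pmf (gw_words c r)) \<and> (\<forall>i\<ge>n. S i = {}))"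
proof
  assume "W \<in> set_pmf (gw_words c (Suc r))"
  then obtain n S where "W = graft n S" "S \<in> PiE_dflt {..<n} {} (\<lambda>_. set_pmf (gw_words c r))"
    by (auto simp: gw_words_Suc_graft set_Pi_pmf simp del: gw_words.simps)
  then show "\<exists>n S. W = graft n S \<and> (\<forall>i<n. S i \<in> set_pmf (gw_words c r)) \<and> (\<forall>i\<ge>n. S i = {})"
    by (intro exI[of _ n] exI[of _ S]) (auto simp: PiE_dflt_def)
next
  assume "\<exists>n S. W = graft n S \<and> (\<forall>i<n. S i \<in> set_pmf (gw_words c r)) \<and> (\<forall>i\<ge>n. S i = {})"
  then obtain n S where "W = graft n S" "S \<in> PiE_dflt {..<n} {} (\<lambda>_. set_pmf (gw_words c r))"
    by (auto simp: PiE_dflt_def)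
  then show "W \<in> set_pmf (gw_words c (Suc r))"
    using assms by (auto simp: gw_words_Suc_graft set_Pi_pmf simp del: gw_words.simps)
qed

lemma ulam_tree_graft:
  assumes "\<And>i. i < n \<Longrightarrow> ulam_tree r (S i)"
  shows "ulam_tree (Suc r) (graft n S)"
  unfolding ulam_tree_def
proof (intro conjI ballI impI)
  show "finite (graft n S)"
    using ulam_tree_finite[OF assms] by (auto simp: graft_def)
next
  fix w assume "w \<in> graft n S"
  then show "length w \<le> Suc r"
    using ulam_tree_length[OF assms] by (cases w) auto
next
  fix w assume "w \<in> graft n S" "w \<noteq> []"
  then obtain i x where "w = i # x" "i < n" "x \<in> S i"
    by (cases w) auto
  then show "butlast w \<in> graft n S"
    using ulam_tree_butlast[OF assms] by (cases "x = []") auto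
next
  fix x assume x: "x \<in> graft n S"
  have "\<exists>m. {j. x @ [j] \<in> graft n S} = {..<m}"
  proof (cases x)
    case Nil
    then have "{j. x @ [j] \<in> graft n S} = {..<n}"
      using ulam_tree_Nil[OF assms] by auto
    then show ?thesis by blast
  next
    case (Cons i y)
    with x have "{j. x @ [j] \<in> graft n S} = {j. y @ [j] \<in> S i}"
      by auto
    then show ?thesis
      using x assms Cons by (auto simp: ulam_tree_def)
  qed
  then show "{j. x @ [j] \<in> graft n S} = {..<n_children (graft n S) x}"
    using n_children_eqI by metis
qed simp

lemma ulam_tree_gw_words:
  assumes "c > 0" "W \<in> set_pmf (gw_words c r)"
  shows "ulam_tree r W"
  using assms(2)
proof (induction r arbitrary: W)
  case 0
  then show ?case
    by (simp add: ulam_tree_def n_children_def)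
next
  case (Suc r)
  then show ?case
    using ulam_tree_graft set_pmf_gw_words_Suc[OF assms(1)] by metis
qed

lemma n_children_graft_Nil:
  "(\<And>i. i < n \<Longrightarrow> [] \<in> S i) \<Longrightarrow> n_children (graft n S) [] = n"
  by (rule n_children_eqI) auto

lemma n_children_graft_Cons:
  "i < n \<Longrightarrow> n_children (graft n S) (i # x) = n_children (S i) x"
  by (simp add: n_children_def)

lemma inner_nodes_graft:
  "inner_nodes (Suc r) (graft n S) = insert [] (\<Union>i<n. (\<lambda>x. i # x) ` inner_nodes r (S i))"
proof (rule set_eqI)
  fix x show "x \<in> inner_nodes (Suc r) (graft n S) \<longleftrightarrow>
      x \<in> insert [] (\<Union>i<n. (\<lambda>x. i # x) ` inner_nodes r (S i))"
    by (cases x) force+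
qed

lemma pmf_gw_words_Suc_graft:
  assumes "c > 0" and S: "\<forall>i<n. S i \<in> set_pmf (gw_words c r)" "\<forall>i\<ge>n. S i = {}"
  shows "pmf (gw_words c (Suc r)) (graft n S) =
    pmf (poisson_pmf c) n * (\<Prod>i<n. pmf (gw_words c r) (S i))"
proof -
  define P where "P = (\<lambda>m::nat. Pi_pmf {..<m} {} (\<lambda>_. gw_words c r))"
  have root: "n_children (graft m S') [] = m" if "S' \<in> set_pmf (P m)" for m S'
    using that ulam_tree_Nil[OF ulam_tree_gw_words[OF assms(1)]]
    by (intro n_children_graft_Nil) (auto simp: P_def set_Pi_pmf PiE_dflt_def)
  have S_P: "S \<in> set_pmf (P n)"
    using S by (auto simp: P_def set_Pi_pmf PiE_dflt_def)
  have other: "pmf (map_pmf (graft m) (P m)) (graft n S) = 0" if "m \<noteq> n" for m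
    using root[OF S_P] root that by (auto intro!: pmf_map_outside)
  have inj: "inj_on (graft n) (set_pmf (P n))"
  proof (rule inj_onI)
    fix S1 S2 assume S12: "S1 \<in> set_pmf (P n)" "S2 \<in> set_pmf (P n)" "graft n S1 = graft n S2"
    have "S1 i = S2 i" for i
    proof (cases "i < n")
      case True
      then have "S1 i = {x. i # x \<in> graft n S1}"
        by simp
      also have "\<dots> = {x. i # x \<in> graft n S2}"
        by (simp only: S12(3))
      also have "\<dots> = S2 i"
        using True by simp
      finally show ?thesis .
    qed (use S12 in \<open>auto simp: P_def set_Pi_pmf PiE_dflt_def\<close>)
    then show "S1 = S2" by blast
  qed
  have "pmf (gw_words c (Suc r)) (graft n S) =
      measure_pmf.expectation (poisson_pmf c) (\<lambda>m. pmf (map_pmf (graft m) (P m)) (graft n S))"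
    by (simp add: gw_words_Suc_graft pmf_bind P_def del: gw_words.simps)
  also have "\<dots> = (\<Sum>m\<in>{n}. pmf (map_pmf (graft m) (P m)) (graft n S) * pmf (poisson_pmf c) m)"
    by (rule integral_measure_pmf_real) (use other in auto)
  also have "\<dots> = pmf (poisson_pmf c) n * pmf (map_pmf (graft n) (P n)) (graft n S)"
    by simp
  also have "pmf (map_pmf (graft n) (P n)) (graft n S) = pmf (P n) S"
    by (rule pmf_map_inj[OF inj S_P])
  also have "\<dots> = (\<Prod>i<n. pmf (gw_words c r) (S i))"
    using S by (simp add: P_def pmf_Pi)
  finally show ?thesis by simp
qed

lemma pmf_gw_words:
  assumes "c > 0" "W \<in> set_pmf (gw_words c r)"
  shows "pmf (gw_words c r) W = (\<Prod>x\<in>inner_nodes r W. pmf (poisson_pmf c) (n_children W x))"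
  using assms(2)
proof (induction r arbitrary: W)
  case 0
  then show ?case by (simp add: inner_nodes_def)
next
  case (Suc r)
  obtain n S where W: "W = graft n S" and S: "\<forall>i<n. S i \<in> set_pmf (gw_words c r)" "\<forall>i\<ge>n. S i = {}"
    using Suc.prems unfolding set_pmf_gw_words_Suc[OF assms(1)] by blast
  have trees: "ulam_tree r (S i)" if "i < n" for i
    using S that ulam_tree_gw_words[OF assms(1)] by blast
  have root: "n_children W [] = n"
    unfolding W using trees by (intro n_children_graft_Nil ulam_tree_Nil)
  let ?pois = "\<lambda>m. pmf (poisson_pmf c) m"
  have "(\<Prod>x\<in>inner_nodes (Suc r) W. ?pois (n_children W x)) =
      ?pois (n_children W []) *
      (\<Prod>x\<in>(\<Union>i<n. (\<lambda>x. i # x) ` inner_nodes r (S i)). ?pois (n_children W x))"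
    unfolding W inner_nodes_graft
    by (rule prod.insert) (use trees in \<open>auto simp: finite_inner_nodes\<close>)
  also have "\<dots> = ?pois n * (\<Prod>i<n. \<Prod>x\<in>(\<lambda>x. i # x) ` inner_nodes r (S i). ?pois (n_children W x))"
    using trees by (subst prod.UNION_disjoint) (auto simp: root finite_inner_nodes)
  also have "\<dots> = ?pois n * (\<Prod>i<n. \<Prod>x\<in>inner_nodes r (S i). ?pois (n_children (S i) x))"
    unfolding W by (simp add: prod.reindex n_children_graft_Cons)
  also have "\<dots> = pmf (gw_words c (Suc r)) W"
    using Suc.IH S W by (simp add: pmf_gw_words_Suc_graft[OF assms(1)] del: gw_words.simps)
  finally show ?case ..
qed

lemma card_graft_le: "card (graft n S) \<le> 1 + (\<Sum>i<n. card (S i))"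
proof -
  have "card (\<Union>i<n. (\<lambda>w. i # w) ` S i) \<le> (\<Sum>i<n. card ((\<lambda>w. i # w) ` S i))"
    by (rule card_UN_le) simp
  also have "\<dots> = (\<Sum>i<n. card (S i))"
    by (simp add: card_image)
  finally show ?thesis
    unfolding graft_def by (intro card_insert_le_m1) simp_all
qed

lemma nn_integral_four_pow_card_graft_le:
  fixes \<nu> :: "nat list set pmf"
  assumes b: "(\<integral>\<^sup>+W. ennreal (4 ^ card W) \<partial>measure_pmf \<nu>) = ennreal b" "b \<ge> 0"
  shows "(\<integral>\<^sup>+S. ennreal (4 ^ card (graft n S)) \<partial>measure_pmf (Pi_pmf {..<n} {} (\<lambda>_. \<nu>)))
    \<le> ennreal (4 * b ^ n)"
proof -
  let ?P = "measure_pmf (Pi_pmf {..<n} {} (\<lambda>_. \<nu>))"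
  have "ennreal (4 ^ card (graft n S)) \<le> 4 * (\<Prod>i<n. ennreal (4 ^ card (S i)))" for S
  proof -
    have "(4::real) ^ card (graft n S) \<le> 4 ^ (1 + (\<Sum>i<n. card (S i)))"
      by (rule power_increasing[OF card_graft_le]) simp
    also have "\<dots> = 4 * (\<Prod>i<n. 4 ^ card (S i))"
      by (simp add: power_sum)
    finally have "ennreal (4 ^ card (graft n S)) \<le> ennreal (4 * (\<Prod>i<n. 4 ^ card (S i)))"
      by (rule ennreal_leI)
    also have "\<dots> = 4 * (\<Prod>i<n. ennreal (4 ^ card (S i)))"
      using ennreal_mult[of 4 "\<Prod>i<n. (4::real) ^ card (S i)"] by (simp add: prod_ennreal prod_nonneg)
    finally show ?thesis .
  qed
  then have "(\<integral>\<^sup>+S. ennreal (4 ^ card (graft n S)) \<partial>?P) \<le> (\<integral>\<^sup>+S. 4 * (\<Prod>i<n. ennreal (4 ^ card (S i))) \<partial>?P)"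
    by (rule nn_integral_mono)
  also have "\<dots> = 4 * (\<Prod>i<n. \<integral>\<^sup>+W. ennreal (4 ^ card W) \<partial>measure_pmf \<nu>)"
    by (simp add: nn_integral_cmult nn_integral_prod_Pi_pmf[of "{..<n}" "{}" "\<lambda>_. \<nu>"
        "\<lambda>_ W. ennreal (4 ^ card W)"])
  also have "\<dots> = ennreal (4 * b ^ n)"
    using b by (simp add: ennreal_mult ennreal_power)
  finally show ?thesis .
qed

text \<open>The weight \<open>4 ^ card W\<close> is submultiplicative under grafting, so its mean \<open>b\<close> at depth \<open>r\<close>
  bounds the mean at depth \<open>r + 1\<close> by \<open>4 * E (b ^ N)\<close> with \<open>N\<close> Poisson, which is finite.\<close>
lemma gw_words_four_pow_card_finite:
  assumes "c > 0"
  shows "(\<integral>\<^sup>+W. ennreal (4 ^ card W) \<partial>measure_pmf (gw_words c r)) \<noteq> \<top>"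
proof (induction r)
  case 0
  then show ?case by simp
next
  case (Suc r)
  obtain b where b: "(\<integral>\<^sup>+W. ennreal (4 ^ card W) \<partial>measure_pmf (gw_words c r)) = ennreal b" "b \<ge> 0"
    using Suc.IH by (cases "\<integral>\<^sup>+W. ennreal (4 ^ card W) \<partial>measure_pmf (gw_words c r)") auto
  have summable: "summable (\<lambda>n. pmf (poisson_pmf c) n * (4 * b ^ n))"
  proof -
    have "(\<lambda>n. pmf (poisson_pmf c) n * (4 * b ^ n)) = (\<lambda>n. (4 * exp (- c)) * (inverse (fact n) * (c * b) ^ n))"
      using assms by (intro ext) (simp add: power_mult_distrib field_simps)
    then show ?thesis
      by (metis summable_exp summable_mult)
  qed
  have "(\<integral>\<^sup>+W. ennreal (4 ^ card W) \<partial>measure_pmf (gw_words c (Suc r)))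
      = (\<integral>\<^sup>+n. (\<integral>\<^sup>+S. ennreal (4 ^ card (graft n S))
          \<partial>measure_pmf (Pi_pmf {..<n} {} (\<lambda>_. gw_words c r))) \<partial>measure_pmf (poisson_pmf c))"
    by (simp add: gw_words_Suc_graft nn_integral_bind_pmf nn_integral_map_pmf del: gw_words.simps)
  also have "\<dots> \<le> (\<integral>\<^sup>+n. ennreal (4 * b ^ n) \<partial>measure_pmf (poisson_pmf c))"
    by (intro nn_integral_mono nn_integral_four_pow_card_graft_le b)
  also have "\<dots> = (\<Sum>n. ennreal (pmf (poisson_pmf c) n * (4 * b ^ n)))"
    by (simp add: nn_integral_measure_pmf nn_integral_count_space_nat ennreal_mult' b(2))
  also have "\<dots> < \<top>"
    using summable b by (simp add: ennreal_suminf_neq_top top.not_eq_extremum)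
  finally show ?case by simp
qed

lemma ulam_tree_children_eq:
  assumes "ulam_tree r W" "x \<in> W"
  shows "{w\<in>W. w \<noteq> [] \<and> butlast w = x} = (\<lambda>j. x @ [j]) ` {..<n_children W x}"
proof (intro set_eqI iffI)
  fix w assume w: "w \<in> {w\<in>W. w \<noteq> [] \<and> butlast w = x}"
  then obtain j where "w = x @ [j]"
    by (cases w rule: rev_cases) auto
  with w show "w \<in> (\<lambda>j. x @ [j]) ` {..<n_children W x}"
    using ulam_tree_snoc_iff[OF assms] by auto
next
  fix w assume "w \<in> (\<lambda>j. x @ [j]) ` {..<n_children W x}"
  then obtain j where "j < n_children W x" "w = x @ [j]"
    by blast
  then show "w \<in> {w\<in>W. w \<noteq> [] \<and> butlast w = x}"
    using ulam_tree_snoc_iff[OF assms, of j] by simp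
qed

lemma sum_n_children_inner_nodes:
  assumes "ulam_tree r W"
  shows "(\<Sum>x\<in>inner_nodes r W. n_children W x) = card W - 1"
proof -
  have fin: "finite W"
    using assms by (rule ulam_tree_finite)
  have nodes: "W - {[]} = (\<Union>x\<in>inner_nodes r W. {w\<in>W. w \<noteq> [] \<and> butlast w = x})"
  proof (intro set_eqI iffI)
    fix w assume w: "w \<in> W - {[]}"
    then have "length (butlast w) < r"
      using ulam_tree_length[OF assms, of w] by (cases w) auto
    then have "butlast w \<in> inner_nodes r W"
      using w ulam_tree_butlast[OF assms] by simp
    with w show "w \<in> (\<Union>x\<in>inner_nodes r W. {w\<in>W. w \<noteq> [] \<and> butlast w = x})"
      by blast
  qed auto
  have "card W - 1 = card (W - {[]})"
    using fin ulam_tree_Nil[OF assms] by simp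
  also have "\<dots> = (\<Sum>x\<in>inner_nodes r W. card {w\<in>W. w \<noteq> [] \<and> butlast w = x})"
    unfolding nodes by (rule card_UN_disjoint) (use fin in \<open>auto simp: inner_nodes_def\<close>)
  also have "\<dots> = (\<Sum>x\<in>inner_nodes r W. n_children W x)"
    using ulam_tree_children_eq[OF assms] by (intro sum.cong) (simp_all add: card_image inj_on_def)
  finally show ?thesis ..
qed

lemma ulam_tree_label_less_card:
  assumes "ulam_tree r W" "w \<in> W" "j \<in> set w"
  shows "j < card W"
  using assms(2,3)
proof (induction w rule: rev_induct)
  case (snoc i x)
  have x: "x \<in> W"
    using ulam_tree_snocD[OF assms(1) snoc.prems(1)] .
  have "n_children W x \<le> card W"
  proof -
    have "card ((\<lambda>j. x @ [j]) ` {j. x @ [j] \<in> W}) \<le> card W"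
      using ulam_tree_finite[OF assms(1)] by (intro card_mono) auto
    then show ?thesis
      by (simp add: n_children_def card_image inj_on_def)
  qed
  moreover have "i < n_children W x"
    using ulam_tree_snoc_iff[OF assms(1) x] snoc.prems(1) by simp
  ultimately show ?case
    using snoc x by auto
qed simp

lemma finite_gw_words_card_less:
  assumes "c > 0"
  shows "finite {W\<in>set_pmf (gw_words c r). card W < N}"
proof (rule finite_subset)
  let ?L = "{xs. set xs \<subseteq> {..<N} \<and> length xs \<le> r}"
  show "{W\<in>set_pmf (gw_words c r). card W < N} \<subseteq> Pow ?L"
    using ulam_tree_gw_words[OF assms] ulam_tree_length ulam_tree_label_less_card
    by fastforce
  show "finite (Pow ?L)"
    by (simp add: finite_lists_length_le)
qed

section \<open>Ordered embeddings and balls\<close>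

definition neighbours :: "'a set set \<Rightarrow> 'a \<Rightarrow> 'a set" where
  "neighbours E v = {y. {v, y} \<in> E}"

lemma simple_graph_edgeD:
  assumes "simple_graph V E" "{a, b} \<in> E"
  shows "a \<in> V" "b \<in> V" "a \<noteq> b"
proof -
  obtain x y where "x \<noteq> y" "x \<in> V" "y \<in> V" "{a, b} = {x, y}"
    using assms unfolding simple_graph_def by blast
  then show "a \<in> V" "b \<in> V" "a \<noteq> b"
    by (auto simp: doubleton_eq_iff)
qed

lemma simple_graph_edge_subset: "simple_graph V E \<Longrightarrow> e \<in> E \<Longrightarrow> e \<subseteq> V"
  unfolding simple_graph_def by auto

lemma simple_graph_finite_edges: "simple_graph V E \<Longrightarrow> finite E"
  using simple_graph_edge_subset
  by (metis Pow_iff finite_Pow_iff finite_subset simple_graph_def subsetI)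

lemma neighbours_subset: "simple_graph V E \<Longrightarrow> neighbours E v \<subseteq> V"
  using simple_graph_edgeD(2) by (fastforce simp: neighbours_def)

lemma card_neighbours:
  assumes "simple_graph V E" "regular V E d" "v \<in> V"
  shows "card (neighbours E v) = d"
proof -
  have "bij_betw (\<lambda>y. {v, y}) (neighbours E v) {e\<in>E. v \<in> e}"
  proof (rule bij_betwI')
    fix x y assume "x \<in> neighbours E v" "y \<in> neighbours E v"
    then have "x \<noteq> v"
      using simple_graph_edgeD(3)[OF assms(1), of v x] by (simp add: neighbours_def)
    then show "({v, x} = {v, y}) = (x = y)"
      by (auto simp: doubleton_eq_iff)
  next
    fix e assume e: "e \<in> {e\<in>E. v \<in> e}"
    then obtain a b where "e = {a, b}"
      using assms(1) unfolding simple_graph_def by blast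
    with e show "\<exists>y\<in>neighbours E v. e = {v, y}"
      by (auto simp: neighbours_def insert_commute)
  qed (simp add: neighbours_def)
  then show ?thesis
    using assms(2,3) by (simp add: bij_betw_same_card regular_def)
qed

lemma card_edges_within:
  assumes "simple_graph V E" "finite S"
  shows "card {e\<in>E. e \<subseteq> S} \<le> card S ^ 2"
proof -
  have "{e\<in>E. e \<subseteq> S} \<subseteq> (\<lambda>(a, b). {a, b}) ` (S \<times> S)"
  proof
    fix e assume e: "e \<in> {e\<in>E. e \<subseteq> S}"
    then obtain a b where "e = {a, b}"
      using assms(1) unfolding simple_graph_def by blast
    with e show "e \<in> (\<lambda>(a, b). {a, b}) ` (S \<times> S)"
      by auto
  qed
  then have "card {e\<in>E. e \<subseteq> S} \<le> card ((\<lambda>(a, b). {a, b}) ` (S \<times> S))"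
    using assms(2) by (intro card_mono) auto
  also have "\<dots> \<le> card (S \<times> S)"
    using assms(2) by (intro card_image_le) simp
  finally show ?thesis
    by (simp add: card_cartesian_product power2_eq_square)
qed

lemma rclass_eqI:
  assumes "bij_betw f A B" "\<forall>e\<in>EA. e \<subseteq> A" "EB = (\<lambda>e. f ` e) ` EA" "f a = b" "a \<in> A"
  shows "rclass (A, EA, a) = rclass (B, EB, b)"
proof (rule set_eqI)
  fix H :: "nat rgraph"
  obtain V' E' o' where H: "H = (V', E', o')"
    by (cases H) auto
  show "H \<in> rclass (A, EA, a) \<longleftrightarrow> H \<in> rclass (B, EB, b)"
  proof
    assume "H \<in> rclass (A, EA, a)"
    then obtain g where g: "bij_betw g A V'" "g a = o'" "E' = (\<lambda>e. g ` e) ` EA"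
      by (auto simp: rclass_def rooted_iso_def H)
    define h where "h = g \<circ> the_inv_into A f"
    have inv: "the_inv_into A f (f x) = x" if "x \<in> A" for x
      using assms(1) that by (simp add: bij_betw_def the_inv_into_f_f)
    have "bij_betw h B V'"
      unfolding h_def using bij_betw_the_inv_into[OF assms(1)] g(1) by (rule bij_betw_trans)
    moreover have "h b = o'"
      using assms(4,5) g(2) inv[of a] unfolding h_def by simp
    moreover have "(\<lambda>e. h ` f ` e) ` EA = (\<lambda>e. g ` e) ` EA"
      using assms(2) inv unfolding h_def by (intro image_cong refl) (force simp: image_image)
    then have "E' = (\<lambda>e. h ` e) ` EB"
      using assms(3) g(3) by (simp add: image_image)
    ultimately show "H \<in> rclass (B, EB, b)"
      by (auto simp: rclass_def rooted_iso_def H)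
  next
    assume "H \<in> rclass (B, EB, b)"
    then obtain g where g: "bij_betw g B V'" "g b = o'" "E' = (\<lambda>e. g ` e) ` EB"
      by (auto simp: rclass_def rooted_iso_def H)
    then have "bij_betw (g \<circ> f) A V'" "(g \<circ> f) a = o'" "E' = (\<lambda>e. (g \<circ> f) ` e) ` EA"
      using assms(1,3,4) by (auto intro: bij_betw_trans simp: image_image image_comp)
    then show "H \<in> rclass (A, EA, a)"
      by (auto simp: rclass_def rooted_iso_def H)
  qed
qed

definition tree_edges :: "(nat list \<Rightarrow> 'a) \<Rightarrow> nat list set \<Rightarrow> 'a set set" where
  "tree_edges \<phi> W = {{\<phi> (butlast w), \<phi> w} | w. w \<in> W \<and> w \<noteq> []}"

text \<open>The edges whose state is inspected when the \<open>r\<close>-ball is explored along an embedded tree.\<close>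
definition explored_edges :: "'a set set \<Rightarrow> (nat list \<Rightarrow> 'a) \<Rightarrow> nat list set \<Rightarrow> nat \<Rightarrow> 'a set set" where
  "explored_edges E \<phi> W r = {e\<in>E. (\<exists>x\<in>inner_nodes r W. \<phi> x \<in> e) \<or> e \<subseteq> \<phi> ` W}"

text \<open>The sibling-order condition removes the automorphisms of \<open>W\<close>.\<close>
definition ordered_embedding ::
    "'a::linorder set \<Rightarrow> 'a set set \<Rightarrow> 'a \<Rightarrow> nat list set \<Rightarrow> (nat list \<Rightarrow> 'a) \<Rightarrow> bool" where
  "ordered_embedding V E u W \<phi> \<longleftrightarrow> \<phi> \<in> W \<rightarrow>\<^sub>E V \<and> inj_on \<phi> W \<and> \<phi> [] = u \<and>
     (\<forall>w\<in>W. w \<noteq> [] \<longrightarrow> {\<phi> (butlast w), \<phi> w} \<in> E) \<and>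
     (\<forall>x j k. x @ [j] \<in> W \<longrightarrow> x @ [k] \<in> W \<longrightarrow> j < k \<longrightarrow> \<phi> (x @ [j]) < \<phi> (x @ [k]))"

lemma tree_edges_subset_explored:
  assumes "ulam_tree r W" "\<forall>w\<in>W. w \<noteq> [] \<longrightarrow> {\<phi> (butlast w), \<phi> w} \<in> E"
  shows "tree_edges \<phi> W \<subseteq> explored_edges E \<phi> W r"
  using assms ulam_tree_butlast[OF assms(1)] by (auto simp: tree_edges_def explored_edges_def)

context
  fixes V :: "'a::linorder set" and E F :: "'a set set" and u :: 'a and r :: nat
    and W :: "nat list set" and \<phi> :: "nat list \<Rightarrow> 'a"
  assumes tree: "ulam_tree r W" and emb: "ordered_embedding V E u W \<phi>"
    and FE: "F \<subseteq> E" and pattern: "F \<inter> explored_edges E \<phi> W r = tree_edges \<phi> W"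
begin

lemma walk_to_tree_node: "w \<in> W \<Longrightarrow> walk F (length w) u (\<phi> w)"
proof (induction w rule: rev_induct)
  case Nil
  then show ?case
    using emb by (simp add: ordered_embedding_def walk0)
next
  case (snoc j x)
  have "{\<phi> (butlast (x @ [j])), \<phi> (x @ [j])} \<in> tree_edges \<phi> W"
    unfolding tree_edges_def using snoc.prems by blast
  then have "{\<phi> x, \<phi> (x @ [j])} \<in> F"
    using pattern by auto
  then show ?case
    using snoc ulam_tree_snocD[OF tree] by (simp add: walkS)
qed

text \<open>A walk of length \<open>k \<le> r\<close> from \<open>u\<close> never leaves the embedded tree: its first edge leaving
  the tree would be an explored edge at an inner node, hence closed.\<close>
lemma walk_ends_in_tree:
  "walk F k u' v \<Longrightarrow> u' = u \<Longrightarrow> k \<le> r \<Longrightarrow> \<exists>w\<in>W. length w \<le> k \<and> \<phi> w = v"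
proof (induction rule: walk.induct)
  case walk0
  then show ?case
    using tree emb by (intro bexI[of _ "[]"]) (auto simp: ulam_tree_Nil ordered_embedding_def)
next
  case (walkS k u' v y)
  then obtain w where w: "w \<in> W" "length w \<le> k" "\<phi> w = v"
    by auto
  with walkS have "{v, y} \<in> explored_edges E \<phi> W r"
    using FE by (auto simp: explored_edges_def)
  then have "{v, y} \<in> tree_edges \<phi> W"
    using walkS.hyps(2) pattern by blast
  then obtain z where z: "z \<in> W" "z \<noteq> []" "{\<phi> (butlast z), \<phi> z} = {v, y}"
    unfolding tree_edges_def by blast
  have z': "butlast z \<in> W"
    using ulam_tree_butlast[OF tree z(1,2)] .
  have inj: "inj_on \<phi> W"
    using emb by (simp add: ordered_embedding_def)
  from z(3) consider "\<phi> (butlast z) = v" "\<phi> z = y" | "\<phi> (butlast z) = y" "\<phi> z = v"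
    by (auto simp: doubleton_eq_iff)
  then show ?case
  proof cases
    case 1
    then have "butlast z = w"
      using inj_onD[OF inj _ z' w(1)] w(3) by simp
    then have "length z = Suc (length w)"
      using z(2) by (cases z rule: rev_cases) auto
    then show ?thesis
      using z 1 w by (intro bexI[of _ z]) auto
  next
    case 2
    then have "z = w"
      using inj_onD[OF inj _ z(1) w(1)] w(3) by simp
    then show ?thesis
      using z' 2 w by (intro bexI[of _ "butlast z"]) auto
  qed
qed

lemma ball_eq_tree_image: "ball V F u r = (\<phi> ` W, tree_edges \<phi> W, u)"
proof -
  have "\<phi> ` W \<subseteq> V"
    using emb by (auto simp: ordered_embedding_def)
  then have vertices: "{v\<in>V. \<exists>k\<le>r. walk F k u v} = \<phi> ` W"
    using walk_ends_in_tree[OF _ refl] walk_to_tree_node ulam_tree_length[OF tree] by fastforce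
  have "tree_edges \<phi> W \<subseteq> {e\<in>F. e \<subseteq> \<phi> ` W}"
    using pattern ulam_tree_butlast[OF tree] by (auto simp: tree_edges_def)
  moreover have "{e\<in>F. e \<subseteq> \<phi> ` W} \<subseteq> tree_edges \<phi> W"
    using pattern FE by (auto simp: explored_edges_def)
  ultimately show ?thesis
    unfolding ball_def Let_def vertices by auto
qed

lemma rclass_ball_eq_word_tree: "rclass (ball V F u r) = rclass (word_tree W)"
proof -
  have "rclass (word_tree W) = rclass (\<phi> ` W, tree_edges \<phi> W, u)"
    unfolding word_tree_def
  proof (rule rclass_eqI)
    show "bij_betw \<phi> W (\<phi> ` W)"
      using emb by (simp add: ordered_embedding_def bij_betw_def)
    show "\<forall>e\<in>{{butlast w, w} |w. w \<in> W \<and> w \<noteq> []}. e \<subseteq> W"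
      using ulam_tree_butlast[OF tree] by auto
    show "tree_edges \<phi> W = (\<lambda>e. \<phi> ` e) ` {{butlast w, w} |w. w \<in> W \<and> w \<noteq> []}"
      unfolding tree_edges_def setcompr_eq_image image_image by simp
    show "\<phi> [] = u"
      using emb by (simp add: ordered_embedding_def)
  qed (rule ulam_tree_Nil[OF tree])
  then show ?thesis
    using ball_eq_tree_image by simp
qed

end

lemma sorted_list_of_set_strict_mono_image:
  fixes h :: "nat \<Rightarrow> 'a::linorder"
  assumes "strict_mono_on {..<k} h"
  shows "sorted_list_of_set (h ` {..<k}) = map h [0..<k]"
proof -
  have sorted: "sorted_wrt (<) (map h [0..<k])"
    using assms unfolding sorted_wrt_iff_nth_less strict_mono_on_def by auto
  then have "length (map h [0..<k]) = card (h ` {..<k})"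
    using distinct_card[of "map h [0..<k]"] by (simp add: strict_sorted_iff lessThan_atLeast0)
  moreover have "set (map h [0..<k]) = h ` {..<k}"
    by (auto simp: lessThan_atLeast0)
  ultimately show ?thesis
    using sorted by (subst sorted_list_of_set_unique[symmetric]) auto
qed

lemma strict_mono_on_lessThan_image_eq:
  fixes f g :: "nat \<Rightarrow> 'a::linorder"
  assumes "strict_mono_on {..<m} f" "strict_mono_on {..<m'} g" "f ` {..<m} = g ` {..<m'}"
  shows "m = m' \<and> (\<forall>j<m. f j = g j)"
proof -
  have maps: "map f [0..<m] = map g [0..<m']"
    using assms by (simp flip: sorted_list_of_set_strict_mono_image)
  then have "m = m'"
    by (metis length_map length_upt minus_nat.diff_0)
  moreover have "f j = g j" if "j < m" for j
    using arg_cong[OF maps, of "\<lambda>xs. xs ! j"] that \<open>m = m'\<close> by simp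
  ultimately show ?thesis
    by blast
qed

lemma ordered_embedding_children_strict_mono:
  assumes "ulam_tree r W" "ordered_embedding V E u W \<phi>" "x \<in> W"
  shows "strict_mono_on {..<n_children W x} (\<lambda>j. \<phi> (x @ [j]))"
  using assms ulam_tree_snoc_iff[OF assms(1,3)]
  by (auto simp: strict_mono_on_def ordered_embedding_def)

lemma children_image_tree_edges:
  assumes tree: "ulam_tree r W" and inj: "inj_on \<phi> W" and x: "x \<in> W"
  shows "(\<lambda>j. \<phi> (x @ [j])) ` {..<n_children W x} =
    {y. {\<phi> x, y} \<in> tree_edges \<phi> W} - (if x = [] then {} else {\<phi> (butlast x)})"
proof (intro set_eqI iffI)
  fix y assume "y \<in> (\<lambda>j. \<phi> (x @ [j])) ` {..<n_children W x}"
  then obtain j where j: "x @ [j] \<in> W" "y = \<phi> (x @ [j])"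
    using ulam_tree_snoc_iff[OF tree x] by auto
  then have "{\<phi> (butlast (x @ [j])), \<phi> (x @ [j])} \<in> tree_edges \<phi> W"
    unfolding tree_edges_def by blast
  then have "{\<phi> x, y} \<in> tree_edges \<phi> W"
    using j(2) by simp
  moreover have "y \<noteq> \<phi> (butlast x)" if "x \<noteq> []"
  proof
    assume "y = \<phi> (butlast x)"
    then have "x @ [j] = butlast x"
      using inj_onD[OF inj] j ulam_tree_butlast[OF tree x that] by simp
    then have "length (x @ [j]) = length (butlast x)"
      by (rule arg_cong)
    then show False
      by simp
  qed
  ultimately show "y \<in> {y. {\<phi> x, y} \<in> tree_edges \<phi> W} - (if x = [] then {} else {\<phi> (butlast x)})"
    by simp
next
  fix y assume y: "y \<in> {y. {\<phi> x, y} \<in> tree_edges \<phi> W} - (if x = [] then {} else {\<phi> (butlast x)})"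
  then obtain z where z: "z \<in> W" "z \<noteq> []" "{\<phi> (butlast z), \<phi> z} = {\<phi> x, y}"
    unfolding tree_edges_def by blast
  have z': "butlast z \<in> W"
    using ulam_tree_butlast[OF tree z(1,2)] .
  from z(3) consider "\<phi> (butlast z) = \<phi> x" "\<phi> z = y" | "\<phi> (butlast z) = y" "\<phi> z = \<phi> x"
    by (auto simp: doubleton_eq_iff)
  then show "y \<in> (\<lambda>j. \<phi> (x @ [j])) ` {..<n_children W x}"
  proof cases
    case 1
    then have "z = x @ [last z]"
      using inj_onD[OF inj _ z' x] z(2) append_butlast_last_id[of z] by simp
    then show ?thesis
      using 1 z(1) ulam_tree_snoc_iff[OF tree x, of "last z"] by (metis image_eqI lessThan_iff)
  next
    case 2
    then show ?thesis
      using inj_onD[OF inj _ z(1) x] y z(2) by simp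
  qed
qed

lemma ordered_embeddings_agree_on_children:
  assumes trees: "ulam_tree r W" "ulam_tree r W'"
    and embs: "ordered_embedding V E u W \<phi>" "ordered_embedding V E u W' \<phi>'"
    and edges: "tree_edges \<phi> W = tree_edges \<phi>' W'"
    and x: "x \<in> W" "x \<in> W'" "\<phi> x = \<phi>' x" "x \<noteq> [] \<Longrightarrow> \<phi> (butlast x) = \<phi>' (butlast x)"
  shows "n_children W x = n_children W' x \<and> (\<forall>j<n_children W x. \<phi> (x @ [j]) = \<phi>' (x @ [j]))"
proof (rule strict_mono_on_lessThan_image_eq)
  show "strict_mono_on {..<n_children W x} (\<lambda>j. \<phi> (x @ [j]))"
    using trees(1) embs(1) x(1) by (rule ordered_embedding_children_strict_mono)
  show "strict_mono_on {..<n_children W' x} (\<lambda>j. \<phi>' (x @ [j]))"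
    using trees(2) embs(2) x(2) by (rule ordered_embedding_children_strict_mono)
  have "inj_on \<phi> W" "inj_on \<phi>' W'"
    using embs by (simp_all add: ordered_embedding_def)
  then show "(\<lambda>j. \<phi> (x @ [j])) ` {..<n_children W x} = (\<lambda>j. \<phi>' (x @ [j])) ` {..<n_children W' x}"
    using x edges by (simp add: children_image_tree_edges[OF trees(1) _ x(1)]
        children_image_tree_edges[OF trees(2) _ x(2)])
qed

text \<open>An ordered embedding is determined by its edge set: the children of each vertex are
  exactly its tree neighbours other than its parent, listed in increasing order.\<close>
lemma ordered_embedding_unique:
  assumes trees: "ulam_tree r W" "ulam_tree r W'"
    and embs: "ordered_embedding V E u W \<phi>" "ordered_embedding V E u W' \<phi>'"
    and edges: "tree_edges \<phi> W = tree_edges \<phi>' W'"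
  shows "W = W' \<and> \<phi> = \<phi>'"
proof -
  have agree: "(w \<in> W \<longleftrightarrow> w \<in> W') \<and> (w \<in> W \<longrightarrow> \<phi> w = \<phi>' w)" for w
  proof (induction w rule: length_induct)
    case (1 w)
    show ?case
    proof (cases w rule: rev_cases)
      case Nil
      then show ?thesis
        using trees embs by (simp add: ulam_tree_Nil ordered_embedding_def)
    next
      case (snoc x j)
      have IH: "(x \<in> W \<longleftrightarrow> x \<in> W') \<and> (x \<in> W \<longrightarrow> \<phi> x = \<phi>' x)"
        "(butlast x \<in> W \<longleftrightarrow> butlast x \<in> W') \<and> (butlast x \<in> W \<longrightarrow> \<phi> (butlast x) = \<phi>' (butlast x))"
        using "1.IH" snoc by simp_all
      show ?thesis
      proof (cases "x \<in> W")
        case True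
        then have "n_children W x = n_children W' x \<and> (\<forall>j<n_children W x. \<phi> (x @ [j]) = \<phi>' (x @ [j]))"
          using IH ulam_tree_butlast[OF trees(1) True]
          by (intro ordered_embeddings_agree_on_children[OF trees embs edges]) auto
        then show ?thesis
          using True IH snoc ulam_tree_snoc_iff[OF trees(1)] ulam_tree_snoc_iff[OF trees(2)] by auto
      next
        case False
        then show ?thesis
          using IH snoc ulam_tree_snocD[OF trees(1)] ulam_tree_snocD[OF trees(2)] by blast
      qed
    qed
  qed
  then have "W = W'"
    by blast
  moreover have "\<phi> = \<phi>'"
  proof
    fix w
    have "\<phi> \<in> W \<rightarrow>\<^sub>E V" "\<phi>' \<in> W' \<rightarrow>\<^sub>E V"
      using embs by (simp_all add: ordered_embedding_def)
    then show "\<phi> w = \<phi>' w"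
      using agree[of w] \<open>W = W'\<close> PiE_arb by (cases "w \<in> W") fastforce+
  qed
  ultimately show ?thesis ..
qed

section \<open>Counting ordered embeddings\<close>

definition ordered_embeddings :: "'a::linorder set \<Rightarrow> 'a set set \<Rightarrow> 'a \<Rightarrow> nat list set \<Rightarrow> (nat list \<Rightarrow> 'a) set" where
  "ordered_embeddings V E u W = {\<phi>. ordered_embedding V E u W \<phi>}"

lemma finite_ordered_embeddings:
  "finite V \<Longrightarrow> finite W \<Longrightarrow> finite (ordered_embeddings V E u W)"
  by (rule finite_subset[of _ "W \<rightarrow>\<^sub>E V"])
    (auto simp: ordered_embeddings_def ordered_embedding_def finite_PiE)

definition attach_children :: "(nat list \<Rightarrow> 'a::linorder) \<Rightarrow> nat list \<Rightarrow> 'a set \<Rightarrow> nat list \<Rightarrow> 'a" where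
  "attach_children \<phi> x C w =
     (if w \<noteq> [] \<and> butlast w = x \<and> last w < card C then sorted_list_of_set C ! last w else \<phi> w)"

lemma attach_children_new:
  "j < card C \<Longrightarrow> attach_children \<phi> x C (x @ [j]) = sorted_list_of_set C ! j"
  by (simp add: attach_children_def)

lemma attach_children_old:
  "w \<notin> (\<lambda>j. x @ [j]) ` {..<card C} \<Longrightarrow> attach_children \<phi> x C w = \<phi> w"
  unfolding attach_children_def by (metis append_butlast_last_id image_eqI lessThan_iff)

lemma attach_children_mem:
  assumes "finite C" "j < card C"
  shows "attach_children \<phi> x C (x @ [j]) \<in> C"
proof -
  have "sorted_list_of_set C ! j \<in> set (sorted_list_of_set C)"
    using assms by (intro nth_mem) simp
  then show ?thesis
    using assms by (simp add: attach_children_new)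
qed

lemma attach_children_image:
  assumes "finite C"
  shows "attach_children \<phi> x C ` (\<lambda>j. x @ [j]) ` {..<card C} = C"
proof -
  have "attach_children \<phi> x C ` (\<lambda>j. x @ [j]) ` {..<card C} =
      (\<lambda>j. sorted_list_of_set C ! j) ` {..<length (sorted_list_of_set C)}"
    by (simp add: image_image attach_children_new)
  also have "\<dots> = set (sorted_list_of_set C)"
    by (auto simp: set_conv_nth)
  finally show ?thesis
    using assms by simp
qed

context
  fixes V :: "'a::linorder set" and E :: "'a set set" and u :: 'a and A :: "nat list set" and x :: "nat list"
  assumes sg: "simple_graph V E"
    and A_closed: "\<forall>w\<in>A. w \<noteq> [] \<longrightarrow> butlast w \<in> A" and x: "x \<in> A" and fresh: "\<forall>j. x @ [j] \<notin> A"
begin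

lemma children_disjoint: "A \<inter> (\<lambda>j. x @ [j]) ` J = {}"
  using fresh by blast

context
  fixes \<phi> :: "nat list \<Rightarrow> 'a" and C :: "'a set"
  assumes emb: "ordered_embedding V E u A \<phi>" and C: "finite C" "C \<subseteq> neighbours E (\<phi> x) - \<phi> ` A"
begin

lemma attach_children_on_old: "w \<in> A \<Longrightarrow> attach_children \<phi> x C w = \<phi> w"
  using children_disjoint by (intro attach_children_old) blast

lemma attach_children_strict_mono:
  "j < k \<Longrightarrow> k < card C \<Longrightarrow> attach_children \<phi> x C (x @ [j]) < attach_children \<phi> x C (x @ [k])"
  using C(1) sorted_wrt_nth_less[OF strict_sorted_list_of_set[of C]] by (simp add: attach_children_new)

lemma attach_children_PiE: "attach_children \<phi> x C \<in> (A \<union> (\<lambda>j. x @ [j]) ` {..<card C}) \<rightarrow>\<^sub>E V"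
proof (rule PiE_I)
  have "\<phi> \<in> A \<rightarrow>\<^sub>E V"
    using emb by (simp add: ordered_embedding_def)
  moreover have "C \<subseteq> V"
    using C(2) neighbours_subset[OF sg] by blast
  ultimately show "attach_children \<phi> x C w \<in> V" if "w \<in> A \<union> (\<lambda>j. x @ [j]) ` {..<card C}" for w
    using that attach_children_on_old attach_children_mem[OF C(1)] by auto
  show "attach_children \<phi> x C w = undefined" if "w \<notin> A \<union> (\<lambda>j. x @ [j]) ` {..<card C}" for w
    using that attach_children_old[of w x C \<phi>] PiE_arb[OF \<open>\<phi> \<in> A \<rightarrow>\<^sub>E V\<close>] by simp
qed

lemma inj_on_attach_children_extended:
  "inj_on (attach_children \<phi> x C) (A \<union> (\<lambda>j. x @ [j]) ` {..<card C})"
proof -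
  let ?Ch = "(\<lambda>j. x @ [j]) ` {..<card C}" and ?\<psi> = "attach_children \<phi> x C"
  have "inj_on ?\<psi> ?Ch"
  proof (rule inj_onI)
    fix a b assume "a \<in> ?Ch" "b \<in> ?Ch" "?\<psi> a = ?\<psi> b"
    then obtain j k where "a = x @ [j]" "b = x @ [k]" "j < card C" "k < card C"
        "?\<psi> (x @ [j]) = ?\<psi> (x @ [k])"
      by auto
    then show "a = b"
      using attach_children_strict_mono[of j k] attach_children_strict_mono[of k j]
      by (cases j k rule: linorder_cases) auto
  qed
  moreover have "?\<psi> ` A \<inter> ?\<psi> ` ?Ch = {}"
  proof -
    have "?\<psi> ` A = \<phi> ` A"
      using attach_children_on_old by (rule image_cong[OF refl])
    moreover have "?\<psi> ` ?Ch \<subseteq> C"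
      using attach_children_mem[OF C(1)] by auto
    ultimately show ?thesis
      using C(2) by blast
  qed
  moreover have "inj_on ?\<psi> A"
  proof (rule inj_onI)
    fix a b assume "a \<in> A" "b \<in> A" "?\<psi> a = ?\<psi> b"
    moreover have "inj_on \<phi> A"
      using emb by (simp add: ordered_embedding_def)
    ultimately show "a = b"
      using attach_children_on_old by (simp add: inj_on_eq_iff)
  qed
  moreover have "A - ?Ch = A" "?Ch - A = ?Ch"
    using children_disjoint by blast+
  ultimately show ?thesis
    by (simp add: inj_on_Un)
qed

lemma attach_children_edge:
  assumes "w \<in> A \<union> (\<lambda>j. x @ [j]) ` {..<card C}" "w \<noteq> []"
  shows "{attach_children \<phi> x C (butlast w), attach_children \<phi> x C w} \<in> E"
proof (cases "w \<in> A")
  case True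
  then show ?thesis
    using assms(2) emb attach_children_on_old A_closed by (simp add: ordered_embedding_def)
next
  case False
  with assms(1) obtain j where j: "w = x @ [j]" "j < card C"
    by auto
  then have "attach_children \<phi> x C w \<in> neighbours E (\<phi> x)"
    using attach_children_mem[OF C(1)] C(2) by auto
  then show ?thesis
    using j attach_children_on_old[OF x] by (simp add: neighbours_def)
qed

lemma attach_children_siblings_ordered:
  assumes "y @ [j] \<in> A \<union> (\<lambda>j. x @ [j]) ` {..<card C}" "y @ [k] \<in> A \<union> (\<lambda>j. x @ [j]) ` {..<card C}" "j < k"
  shows "attach_children \<phi> x C (y @ [j]) < attach_children \<phi> x C (y @ [k])"
proof (cases "y = x")
  case True
  then show ?thesis
    using assms fresh attach_children_strict_mono by auto
next
  case False
  then show ?thesis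
    using assms emb attach_children_on_old by (auto simp: ordered_embedding_def)
qed

lemma ordered_embedding_attach_children:
  "ordered_embedding V E u (A \<union> (\<lambda>j. x @ [j]) ` {..<card C}) (attach_children \<phi> x C)"
  using attach_children_PiE inj_on_attach_children_extended attach_children_edge
    attach_children_siblings_ordered emb
  unfolding ordered_embedding_def by (simp add: attach_children_def)

end

lemma inj_on_attach_children:
  "inj_on (\<lambda>(\<phi>, C). attach_children \<phi> x C)
     (SIGMA \<phi>:ordered_embeddings V E u A. {C. C \<subseteq> neighbours E (\<phi> x) - \<phi> ` A \<and> card C = n})"
proof (rule inj_onI, clarify)
  fix \<phi> C \<psi> D
  assume \<phi>: "\<phi> \<in> ordered_embeddings V E u A" and \<psi>: "\<psi> \<in> ordered_embeddings V E u A"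
    and C: "C \<subseteq> neighbours E (\<phi> x) - \<phi> ` A" "n = card C"
    and D: "D \<subseteq> neighbours E (\<psi> x) - \<psi> ` A" "card D = card C"
    and eq: "attach_children \<phi> x C = attach_children \<psi> x D"
  have "C \<subseteq> V" "D \<subseteq> V"
    using C(1) D(1) neighbours_subset[OF sg] by blast+
  then have fin: "finite C" "finite D"
    using sg by (auto simp: simple_graph_def intro: finite_subset)
  have "\<phi> w = \<psi> w" for w
  proof (cases "w \<in> A")
    case True
    then have "w \<notin> (\<lambda>j. x @ [j]) ` {..<card C}"
      using fresh by blast
    then show ?thesis
      using eq D(2) attach_children_old by metis
  next
    case False
    have "\<phi> \<in> A \<rightarrow>\<^sub>E V" "\<psi> \<in> A \<rightarrow>\<^sub>E V"
      using \<phi> \<psi> by (simp_all add: ordered_embeddings_def ordered_embedding_def)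
    then show ?thesis
      using PiE_arb[OF _ False] by metis
  qed
  moreover have "C = D"
    using attach_children_image[OF fin(1), of \<phi> x] attach_children_image[OF fin(2), of \<psi> x] eq D(2)
    by simp
  ultimately show "\<phi> = \<psi> \<and> C = D"
    by blast
qed

text \<open>Every choice of images for the \<open>n\<close> new children among the at least \<open>d - card A\<close> unused
  neighbours of \<open>\<phi> x\<close> gives a different extension.\<close>
lemma card_ordered_embeddings_attach:
  assumes reg: "regular V E d" and fin: "finite A"
  shows "card (ordered_embeddings V E u A) * ((d - card A) choose n)
     \<le> card (ordered_embeddings V E u (A \<union> (\<lambda>j. x @ [j]) ` {..<n}))"
proof -
  let ?Cs = "\<lambda>\<phi>. {C. C \<subseteq> neighbours E (\<phi> x) - \<phi> ` A \<and> card C = n}"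
  have finV: "finite V"
    using sg by (simp add: simple_graph_def)
  have fin_nb: "finite (neighbours E v)" for v
    using neighbours_subset[OF sg] finV by (rule finite_subset)
  have "(d - card A) choose n \<le> card (?Cs \<phi>)" if "\<phi> \<in> ordered_embeddings V E u A" for \<phi>
  proof -
    have "\<phi> x \<in> V"
      using that x by (auto simp: ordered_embeddings_def ordered_embedding_def)
    then have "d - card A \<le> card (neighbours E (\<phi> x) - \<phi> ` A)"
      using card_neighbours[OF sg reg] diff_card_le_card_Diff[of "\<phi> ` A" "neighbours E (\<phi> x)"]
        card_image_le[OF fin, of \<phi>] fin by fastforce
    then show ?thesis
      using fin_nb by (simp add: n_subsets binomial_right_mono)
  qed
  then have "card (ordered_embeddings V E u A) * ((d - card A) choose n)
      \<le> (\<Sum>\<phi>\<in>ordered_embeddings V E u A. card (?Cs \<phi>))"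
    using sum_mono[of "ordered_embeddings V E u A" "\<lambda>_. (d - card A) choose n"] by simp
  also have "\<dots> = card (SIGMA \<phi>:ordered_embeddings V E u A. ?Cs \<phi>)"
    using finite_ordered_embeddings[OF finV fin] fin_nb by (intro card_SigmaI[symmetric]) auto
  also have "\<dots> = card ((\<lambda>(\<phi>, C). attach_children \<phi> x C) ` (SIGMA \<phi>:ordered_embeddings V E u A. ?Cs \<phi>))"
    by (rule card_image[OF inj_on_attach_children, symmetric])
  also have "\<dots> \<le> card (ordered_embeddings V E u (A \<union> (\<lambda>j. x @ [j]) ` {..<n}))"
  proof (rule card_mono)
    show "finite (ordered_embeddings V E u (A \<union> (\<lambda>j. x @ [j]) ` {..<n}))"
      using finV fin by (simp add: finite_ordered_embeddings)
    show "(\<lambda>(\<phi>, C). attach_children \<phi> x C) ` (SIGMA \<phi>:ordered_embeddings V E u A. ?Cs \<phi>)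
        \<subseteq> ordered_embeddings V E u (A \<union> (\<lambda>j. x @ [j]) ` {..<n})"
    proof (rule subsetI)
      fix \<psi> assume "\<psi> \<in> (\<lambda>(\<phi>, C). attach_children \<phi> x C) ` (SIGMA \<phi>:ordered_embeddings V E u A. ?Cs \<phi>)"
      then obtain \<phi> C where \<psi>: "\<psi> = attach_children \<phi> x C" "\<phi> \<in> ordered_embeddings V E u A"
          "C \<subseteq> neighbours E (\<phi> x) - \<phi> ` A" "card C = n"
        by fastforce
      moreover have "finite C"
        using \<psi>(3) fin_nb by (meson Diff_subset finite_subset)
      ultimately show "\<psi> \<in> ordered_embeddings V E u (A \<union> (\<lambda>j. x @ [j]) ` {..<n})"
        using ordered_embedding_attach_children[of \<phi> C] by (simp add: ordered_embeddings_def)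
    qed
  qed
  finally show ?thesis .
qed

end

definition expanded_subtree :: "nat list set \<Rightarrow> nat list set \<Rightarrow> nat list set" where
  "expanded_subtree W P = insert [] {w\<in>W. w \<noteq> [] \<and> butlast w \<in> P}"

lemma expanded_subtree_subset: "[] \<in> W \<Longrightarrow> expanded_subtree W P \<subseteq> W"
  by (auto simp: expanded_subtree_def)

lemma expanded_subtree_inner_nodes:
  assumes "ulam_tree r W"
  shows "expanded_subtree W (inner_nodes r W) = W"
proof (intro set_eqI iffI)
  fix w assume "w \<in> W"
  then show "w \<in> expanded_subtree W (inner_nodes r W)"
    using ulam_tree_snocD[OF assms] ulam_tree_length[OF assms, of w]
    by (cases w rule: rev_cases) (auto simp: expanded_subtree_def)
qed (use ulam_tree_Nil[OF assms] in \<open>auto simp: expanded_subtree_def\<close>)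

lemma expanded_subtree_remove_deepest:
  assumes tree: "ulam_tree r W" and P: "P \<subseteq> W" "\<forall>y\<in>P. y \<noteq> [] \<longrightarrow> butlast y \<in> P"
    and x: "x \<in> P" "\<forall>y\<in>P. length y \<le> length x"
  defines "A \<equiv> expanded_subtree W (P - {x})"
  shows "expanded_subtree W P = A \<union> (\<lambda>j. x @ [j]) ` {..<n_children W x}"
    and "\<forall>w\<in>A. w \<noteq> [] \<longrightarrow> butlast w \<in> A" and "x \<in> A" and "\<forall>j. x @ [j] \<notin> A"
proof -
  have "expanded_subtree W P = A \<union> {w\<in>W. w \<noteq> [] \<and> butlast w = x}"
    using x(1) unfolding A_def expanded_subtree_def by auto
  then show "expanded_subtree W P = A \<union> (\<lambda>j. x @ [j]) ` {..<n_children W x}"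
    using ulam_tree_children_eq[OF tree] x(1) P(1) by auto
  show "x \<in> A"
  proof (cases "x = []")
    case False
    then have "butlast x \<in> P - {x}"
      using P(2) x(1) by (cases x rule: rev_cases) auto
    then show ?thesis
      using False x(1) P(1) by (auto simp: A_def expanded_subtree_def)
  qed (simp add: A_def expanded_subtree_def)
  show "\<forall>w\<in>A. w \<noteq> [] \<longrightarrow> butlast w \<in> A"
  proof (intro ballI impI)
    fix w assume w: "w \<in> A" "w \<noteq> []"
    then have bw: "butlast w \<in> P" "butlast w \<noteq> x"
      by (auto simp: A_def expanded_subtree_def)
    show "butlast w \<in> A"
    proof (cases "butlast w = []")
      case False
      have "length (butlast (butlast w)) < length x"
        using x(2) bw(1) False by (cases "butlast w" rule: rev_cases) fastforce+
      then have "butlast (butlast w) \<in> P - {x}"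
        using P(2) bw(1) False by auto
      then show ?thesis
        using False bw(1) P(1) by (auto simp: A_def expanded_subtree_def)
    qed (simp add: A_def expanded_subtree_def)
  qed
  show "\<forall>j. x @ [j] \<notin> A"
    by (simp add: A_def expanded_subtree_def)
qed

lemma prefix_closed_Diff_deepest:
  assumes "\<forall>y\<in>P. y \<noteq> [] \<longrightarrow> butlast y \<in> P" "\<forall>y\<in>P. length y \<le> length x"
  shows "\<forall>y\<in>P - {x}. y \<noteq> [] \<longrightarrow> butlast y \<in> P - {x}"
proof (intro ballI impI)
  fix y assume y: "y \<in> P - {x}" "y \<noteq> []"
  then have "length (butlast y) < length x"
    using assms(2) by (cases y rule: rev_cases) auto
  then show "butlast y \<in> P - {x}"
    using assms(1) y by auto
qed

lemma card_ordered_embeddings_root: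
  assumes "finite V" "u \<in> V"
  shows "card (ordered_embeddings V E u {[]}) \<noteq> 0"
proof -
  have "(\<lambda>w. if w = [] then u else undefined) \<in> ordered_embeddings V E u {[]}"
    using assms(2) by (auto simp: ordered_embeddings_def ordered_embedding_def split: if_splits)
  then show ?thesis
    using assms(1) by (auto simp: finite_ordered_embeddings)
qed

lemma card_ordered_embeddings_expanded_ge:
  assumes sg: "simple_graph V E" and reg: "regular V E d" and u: "u \<in> V" and tree: "ulam_tree r W"
    and P: "P \<subseteq> inner_nodes r W" "\<forall>y\<in>P. y \<noteq> [] \<longrightarrow> butlast y \<in> P"
  shows "(\<Prod>x\<in>P. (d - card W) choose n_children W x)
    \<le> card (ordered_embeddings V E u (expanded_subtree W P))"
  using P
proof (induction "card P" arbitrary: P rule: less_induct)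
  case less
  have finV: "finite V"
    using sg by (simp add: simple_graph_def)
  have finW: "finite W"
    using tree by (rule ulam_tree_finite)
  have finP: "finite P"
    using less.prems(1) finW by (auto simp: inner_nodes_def intro: finite_subset)
  show ?case
  proof (cases "P = {}")
    case True
    then show ?thesis
      using card_ordered_embeddings_root[OF finV u, of E] by (simp add: expanded_subtree_def Suc_le_eq)
  next
    case False
    have "Max (length ` P) \<in> length ` P"
      using finP False by (intro Max_in) auto
    then obtain x where "x \<in> P" "length x = Max (length ` P)"
      by auto
    then have x: "x \<in> P" "\<forall>y\<in>P. length y \<le> length x"
      using finP by auto
    let ?A = "expanded_subtree W (P - {x})" and ?n = "n_children W x"
    have PW: "P \<subseteq> W"
      using less.prems(1) by (auto simp: inner_nodes_def)
    note A = expanded_subtree_remove_deepest[OF tree PW less.prems(2) x]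
    have IH: "(\<Prod>y\<in>P - {x}. (d - card W) choose n_children W y) \<le> card (ordered_embeddings V E u ?A)"
      using less.prems card_gt_0_iff[of P] x finP prefix_closed_Diff_deepest[OF less.prems(2) x(2)]
      by (intro less.hyps) auto
    have "card ?A \<le> card W"
      using expanded_subtree_subset[OF ulam_tree_Nil[OF tree]] finW by (rule card_mono[rotated])
    then have "(d - card W) choose ?n \<le> (d - card ?A) choose ?n"
      by (intro binomial_right_mono) simp
    have finA: "finite ?A"
      using finW expanded_subtree_subset[OF ulam_tree_Nil[OF tree]] by (rule finite_subset[rotated])
    have "(\<Prod>y\<in>P. (d - card W) choose n_children W y) =
        (\<Prod>y\<in>P - {x}. (d - card W) choose n_children W y) * ((d - card W) choose ?n)"
      by (subst prod.remove[OF finP x(1)]) (rule mult.commute)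
    also have "\<dots> \<le> card (ordered_embeddings V E u ?A) * ((d - card ?A) choose ?n)"
      using IH \<open>(d - card W) choose ?n \<le> (d - card ?A) choose ?n\<close> by (rule mult_le_mono)
    also have "\<dots> \<le> card (ordered_embeddings V E u (?A \<union> (\<lambda>j. x @ [j]) ` {..<?n}))"
      by (rule card_ordered_embeddings_attach[OF sg A(2-4) reg finA])
    finally show ?thesis
      by (simp only: A(1))
  qed
qed

lemma card_ordered_embeddings_ge:
  assumes "simple_graph V E" "regular V E d" "u \<in> V" "ulam_tree r W"
  shows "(\<Prod>x\<in>inner_nodes r W. (d - card W) choose n_children W x) \<le> card (ordered_embeddings V E u W)"
  using card_ordered_embeddings_expanded_ge[OF assms, of "inner_nodes r W"]
    ulam_tree_butlast[OF assms(4)]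
  by (simp add: expanded_subtree_inner_nodes[OF assms(4)] less_imp_diff_less)

section \<open>Probability of an exploration pattern\<close>

lemma prob_percolation_pattern:
  assumes "finite E" "T \<subseteq> D" "D \<subseteq> E" "0 \<le> p" "p \<le> 1"
  shows "measure_pmf.prob (percolation E p) {F. F \<inter> D = T} = p ^ card T * (1 - p) ^ card (D - T)"
proof -
  define B where "B = (\<lambda>e. if e \<in> D then {e \<in> T} else (UNIV :: bool set))"
  have preimage: "(\<lambda>f. {e\<in>E. f e}) -` {F. F \<inter> D = T} = Pi E B"
    using assms(2,3) by (auto simp: B_def Pi_def)
  have "measure_pmf.prob (percolation E p) {F. F \<inter> D = T} =
      (\<Prod>e\<in>E. measure_pmf.prob (bernoulli_pmf p) (B e))"
    unfolding percolation_def measure_map_pmf preimage by (rule measure_Pi_pmf_Pi[OF assms(1)])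
  also have "\<dots> = (\<Prod>e\<in>E. if e \<in> T then p else if e \<in> D then 1 - p else 1)"
    using assms(2,4,5) by (intro prod.cong) (auto simp: B_def measure_pmf_single)
  also have "\<dots> = (\<Prod>e\<in>T. p) * (\<Prod>e\<in>D - T. 1 - p)"
  proof -
    have "finite D"
      using assms(1,3) by (rule finite_subset[rotated])
    then have "(\<Prod>e\<in>E. if e \<in> T then p else if e \<in> D then 1 - p else 1) =
        (\<Prod>e\<in>T \<union> (D - T). if e \<in> T then p else 1 - p)"
      using assms(1-3) by (intro prod.mono_neutral_cong_right) auto
    also have "\<dots> = (\<Prod>e\<in>T. p) * (\<Prod>e\<in>D - T. 1 - p)"
      using \<open>finite D\<close> assms(2) by (subst prod.union_disjoint) (auto intro: finite_subset)
    finally show ?thesis .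
  qed
  finally show ?thesis
    by simp
qed

lemma prob_percolation_restrict:
  "measure_pmf.prob (percolation E p) {F. F \<subseteq> E \<and> Q F} = measure_pmf.prob (percolation E p) {F. Q F}"
proof -
  have "{F. F \<subseteq> E \<and> Q F} \<inter> set_pmf (percolation E p) = {F. Q F} \<inter> set_pmf (percolation E p)"
    by (auto simp: percolation_def)
  then show ?thesis
    by (metis measure_Int_set_pmf)
qed

lemma card_tree_edges_le: "finite W \<Longrightarrow> [] \<in> W \<Longrightarrow> card (tree_edges \<phi> W) \<le> card W - 1"
proof -
  assume W: "finite W" "[] \<in> W"
  have "tree_edges \<phi> W = (\<lambda>w. {\<phi> (butlast w), \<phi> w}) ` (W - {[]})"
    unfolding tree_edges_def by auto
  then have "card (tree_edges \<phi> W) \<le> card (W - {[]})"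
    using W(1) by (simp add: card_image_le)
  then show ?thesis
    using W by simp
qed

lemma card_explored_edges_le:
  assumes sg: "simple_graph V E" and reg: "regular V E d" and tree: "ulam_tree r W"
    and \<phi>: "\<phi> ` W \<subseteq> V"
  shows "card (explored_edges E \<phi> W r) \<le> d * card (inner_nodes r W) + card W ^ 2"
proof -
  have finE: "finite E"
    using sg by (rule simple_graph_finite_edges)
  have finW: "finite W"
    using tree by (rule ulam_tree_finite)
  have "card (explored_edges E \<phi> W r)
      \<le> card ((\<Union>x\<in>inner_nodes r W. {e\<in>E. \<phi> x \<in> e}) \<union> {e\<in>E. e \<subseteq> \<phi> ` W})"
    by (intro card_mono finite_subset[OF _ finE]) (auto simp: explored_edges_def)
  also have "\<dots> \<le> (\<Sum>x\<in>inner_nodes r W. card {e\<in>E. \<phi> x \<in> e}) + card {e\<in>E. e \<subseteq> \<phi> ` W}"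
    using card_UN_le[OF finite_inner_nodes[OF tree]] card_Un_le add_right_mono order_trans by blast
  also have "(\<Sum>x\<in>inner_nodes r W. card {e\<in>E. \<phi> x \<in> e}) = d * card (inner_nodes r W)"
    using reg \<phi> by (simp add: regular_def subset_eq)
  also have "card {e\<in>E. e \<subseteq> \<phi> ` W} \<le> card W ^ 2"
    using card_edges_within[OF sg] card_image_le[OF finW, of \<phi>] finW
    by (meson finite_imageI order_trans power_mono zero_le)
  finally show ?thesis
    by simp
qed

lemma prob_exploration_pattern_ge:
  assumes sg: "simple_graph V E" and reg: "regular V E d" and tree: "ulam_tree r W"
    and emb: "ordered_embedding V E u W \<phi>" and p: "0 \<le> p" "p \<le> 1"
  shows "p ^ (card W - 1) * (1 - p) ^ (d * card (inner_nodes r W) + card W ^ 2)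
    \<le> measure_pmf.prob (percolation E p) {F. F \<inter> explored_edges E \<phi> W r = tree_edges \<phi> W}"
proof -
  let ?D = "explored_edges E \<phi> W r" and ?T = "tree_edges \<phi> W"
  have finE: "finite E"
    using sg by (rule simple_graph_finite_edges)
  have TD: "?T \<subseteq> ?D"
    using emb by (intro tree_edges_subset_explored[OF tree]) (simp add: ordered_embedding_def)
  have DE: "?D \<subseteq> E"
    by (auto simp: explored_edges_def)
  have "\<phi> ` W \<subseteq> V"
    using emb by (auto simp: ordered_embedding_def)
  then have "card (?D - ?T) \<le> d * card (inner_nodes r W) + card W ^ 2"
    using card_explored_edges_le[OF sg reg tree] card_Diff_subset[OF _ TD] finite_subset[OF DE finE]
    by (meson card_mono Diff_subset order_trans)
  then have "p ^ (card W - 1) * (1 - p) ^ (d * card (inner_nodes r W) + card W ^ 2)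
      \<le> p ^ card ?T * (1 - p) ^ card (?D - ?T)"
    using card_tree_edges_le[OF ulam_tree_finite[OF tree] ulam_tree_Nil[OF tree]] p
    by (intro mult_mono power_decreasing) auto
  also have "\<dots> = measure_pmf.prob (percolation E p) {F. F \<inter> ?D = ?T}"
    by (rule prob_percolation_pattern[symmetric, OF finE TD DE p])
  finally show ?thesis .
qed

section \<open>Comparison with the Poisson weights\<close>

lemma binomial_fact_ge:
  assumes "k \<le> N + 1"
  shows "(real N - real k + 1) ^ k \<le> real (N choose k) * fact k"
proof -
  have "(real N - real k + 1) ^ k = (\<Prod>i = 0..<k. real N - real k + 1)"
    by simp
  also have "\<dots> \<le> (\<Prod>i = 0..<k. (real N - real k + 1) + real i)"
    using assms by (intro prod_mono) auto
  also have "\<dots> = real (N choose k) * fact k"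
    by (simp add: binomial_gbinomial gbinomial_pochhammer' pochhammer_prod)
  finally show ?thesis .
qed

lemma binomial_power_ge:
  fixes c :: real and d m k :: nat
  assumes "c \<ge> 0" "k \<le> m" "2 * m \<le> d"
  shows "(c * (1 - 2 * real m / d)) ^ k / fact k \<le> real ((d - m) choose k) * (c / d) ^ k"
proof (cases "d = 0")
  case False
  have "(real d - 2 * real m) ^ k \<le> (real (d - m) - real k + 1) ^ k"
    using assms by (intro power_mono) auto
  also have "\<dots> \<le> real ((d - m) choose k) * fact k"
    using assms by (intro binomial_fact_ge) simp
  finally have "(real d - 2 * real m) ^ k / fact k \<le> real ((d - m) choose k)"
    by (simp add: divide_le_eq)
  then have "(real d - 2 * real m) ^ k / fact k * (c / d) ^ k \<le> real ((d - m) choose k) * (c / d) ^ k"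
    using assms(1) by (intro mult_right_mono) simp_all
  moreover have "c * (1 - 2 * real m / d) = (real d - 2 * real m) * (c / d)"
    using False by (simp add: field_simps)
  then have "(c * (1 - 2 * real m / d)) ^ k / fact k = (real d - 2 * real m) ^ k / fact k * (c / d) ^ k"
    by (simp only: power_mult_distrib) simp
  ultimately show ?thesis
    by simp
qed (use assms in simp)

lemma prod_binomial_power_ge:
  fixes c :: real and d m :: nat and n :: "'a \<Rightarrow> nat"
  assumes c: "c \<ge> 0" and I: "finite I" "(\<Sum>x\<in>I. n x) = m - 1" and dm: "2 * m \<le> d"
  shows "(1 - 2 * real m / d) ^ (m - 1) * (\<Prod>x\<in>I. c ^ n x / fact (n x))
    \<le> (\<Prod>x\<in>I. real ((d - m) choose n x)) * (c / d) ^ (m - 1)"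
proof -
  let ?q = "1 - 2 * real m / d"
  have q: "?q \<ge> 0"
    using dm by (cases "d = 0") (auto simp: field_simps)
  have "n x \<le> m" if "x \<in> I" for x
    using member_le_sum[OF that, of n] I by simp
  then have "(\<Prod>x\<in>I. (c * ?q) ^ n x / fact (n x)) \<le> (\<Prod>x\<in>I. real ((d - m) choose n x) * (c / d) ^ n x)"
    using c q dm by (intro prod_mono conjI binomial_power_ge) auto
  moreover have "(\<Prod>x\<in>I. (c * ?q) ^ n x / fact (n x)) = (\<Prod>x\<in>I. ?q ^ n x * (c ^ n x / fact (n x)))"
    by (intro prod.cong) (simp_all add: power_mult_distrib)
  moreover have "\<dots> = ?q ^ (m - 1) * (\<Prod>x\<in>I. c ^ n x / fact (n x))"
    unfolding prod.distrib power_sum[symmetric] I(2) ..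
  moreover have "(\<Prod>x\<in>I. real ((d - m) choose n x) * (c / d) ^ n x) =
      (\<Prod>x\<in>I. real ((d - m) choose n x)) * (c / d) ^ (m - 1)"
    by (simp add: prod.distrib power_sum[symmetric] I(2))
  ultimately show ?thesis
    by simp
qed

lemma exp_le_one_minus_power:
  fixes p :: real
  assumes "0 \<le> p" "p \<le> 1 / 2"
  shows "exp (- real N * (p + 2 * p ^ 2)) \<le> (1 - p) ^ N"
proof -
  have "real N * (- p - 2 * p ^ 2) \<le> real N * ln (1 - p)"
    using ln_one_minus_pos_lower_bound[OF assms] by (rule mult_left_mono) simp
  then have "exp (- real N * (p + 2 * p ^ 2)) \<le> exp (real N * ln (1 - p))"
    by (simp add: algebra_simps)
  also have "\<dots> = (1 - p) ^ N"
    using assms by (simp add: exp_of_nat_mult)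
  finally show ?thesis .
qed

lemma one_minus_power_ge:
  fixes c :: real and d m k :: nat
  assumes c: "c > 0" and dc: "2 * c \<le> d" and km: "k \<le> m"
  shows "exp (- c) ^ k * (1 - (2 * c ^ 2 + 2 * c) * real m ^ 2 / d) \<le> (1 - c / d) ^ (d * k + m ^ 2)"
proof -
  define p where "p = c / d"
  define Y where "Y = 2 * c ^ 2 * k / d + real m ^ 2 * p + 2 * real m ^ 2 * p ^ 2"
  have d0: "real d > 0"
    using c dc by linarith
  have p: "0 \<le> p" "2 * p \<le> 1" "p \<le> 1 / 2"
    using c dc d0 by (auto simp: p_def field_simps)
  have "k \<le> m ^ 2"
    using le_trans[OF km le_square[of m]] by (simp add: power2_eq_square)
  then have "real k \<le> real m ^ 2"
    by (metis of_nat_le_iff of_nat_power)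
  then have "2 * c ^ 2 * k / d \<le> 2 * c ^ 2 * real m ^ 2 / d"
    using d0 by (intro divide_right_mono mult_left_mono) auto
  moreover have "2 * real m ^ 2 * p ^ 2 \<le> real m ^ 2 * p"
    using mult_left_mono[OF mult_right_mono[OF p(2) p(1)], of "real m ^ 2"]
    by (simp add: power2_eq_square algebra_simps)
  ultimately have "Y \<le> 2 * c ^ 2 * real m ^ 2 / d + 2 * (real m ^ 2 * p)"
    unfolding Y_def by linarith
  also have "\<dots> = (2 * c ^ 2 + 2 * c) * real m ^ 2 / d"
    using d0 by (simp add: p_def field_simps)
  finally have "Y \<le> (2 * c ^ 2 + 2 * c) * real m ^ 2 / d" .
  then have "exp (- c) ^ k * (1 - (2 * c ^ 2 + 2 * c) * real m ^ 2 / d) \<le> exp (- c) ^ k * exp (- Y)"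
    using exp_ge_add_one_self[of "- Y"] by (intro mult_left_mono) auto
  also have "\<dots> = exp (- real (d * k + m ^ 2) * (p + 2 * p ^ 2))"
  proof -
    have "- real (d * k + m ^ 2) * (p + 2 * p ^ 2) = real k * (- c) + - Y"
      using d0 by (simp add: Y_def p_def field_simps power2_eq_square)
    then show ?thesis
      by (simp only: exp_add exp_of_nat_mult)
  qed
  also have "\<dots> \<le> (1 - c / d) ^ (d * k + m ^ 2)"
    using p(1,3) unfolding p_def by (rule exp_le_one_minus_power)
  finally show ?thesis .
qed

lemma weight_less_imp_le:
  fixes c :: real and d m :: nat
  assumes c: "c > 0" and m: "1 \<le> m" and K: "(2 + 2 * c + 2 * c ^ 2) * real m ^ 2 < d"
  shows "2 * m \<le> d" "2 * c \<le> d"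
proof -
  have m2: "1 \<le> real m ^ 2"
    using m by (simp add: one_le_power)
  have "2 * real m \<le> 2 * real m ^ 2"
    using m by (simp add: power2_eq_square)
  also have "\<dots> \<le> (2 + 2 * c + 2 * c ^ 2) * real m ^ 2"
    using c by (intro mult_right_mono) auto
  finally have "real (2 * m) \<le> real d"
    using K by simp
  then show "2 * m \<le> d"
    by (simp only: of_nat_le_iff)
  have "2 * c \<le> 2 * c * real m ^ 2"
    using m2 c by simp
  also have "\<dots> \<le> (2 + 2 * c + 2 * c ^ 2) * real m ^ 2"
    using c by (intro mult_right_mono) auto
  finally show "2 * c \<le> d"
    using K by simp
qed

lemma one_minus_sq_le_power:
  fixes d m :: nat
  assumes "2 * m \<le> d" "0 < d" "1 \<le> m"
  shows "1 - 2 * real m ^ 2 / d \<le> (1 - 2 * real m / d) ^ (m - 1)"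
proof -
  have "1 + real (m - 1) * (- (2 * real m / d)) \<le> (1 + - (2 * real m / d)) ^ (m - 1)"
    using assms by (intro Bernoulli_inequality) (simp add: field_simps)
  moreover have "real (m - 1) * (2 * real m / d) \<le> 2 * real m ^ 2 / d"
    using assms by (simp add: divide_right_mono power2_eq_square of_nat_diff)
  ultimately show ?thesis
    by simp
qed

lemma prod_pmf_poisson:
  assumes "c > 0"
  shows "(\<Prod>x\<in>I. pmf (poisson_pmf c) (n x)) = (\<Prod>x\<in>I. c ^ n x / fact (n x)) * exp (- c) ^ card I"
proof -
  have "(\<Prod>x\<in>I. pmf (poisson_pmf c) (n x)) = (\<Prod>x\<in>I. c ^ n x / fact (n x) * exp (- c))"
    using assms by simp
  also have "\<dots> = (\<Prod>x\<in>I. c ^ n x / fact (n x)) * (\<Prod>x\<in>I. exp (- c))"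
    by (rule prod.distrib)
  finally show ?thesis
    by simp
qed

text \<open>The binomial factors and \<open>p ^ (m - 1)\<close> reproduce the Poisson weights \<open>c ^ k / k!\<close> up to a
  factor \<open>1 - O(m\<^sup>2 / d)\<close>, and the closed explored edges cost \<open>exp (-c)\<close> per inner node up to
  another such factor.\<close>
lemma poisson_prod_le_percolation_weight:
  fixes c :: real and d m :: nat and n :: "'a \<Rightarrow> nat"
  assumes c: "c > 0" and I: "finite I" "card I \<le> m" "(\<Sum>x\<in>I. n x) = m - 1" and m: "1 \<le> m"
    and K: "(2 + 2 * c + 2 * c ^ 2) * real m ^ 2 < d"
  shows "(\<Prod>x\<in>I. pmf (poisson_pmf c) (n x)) * (1 - (2 + 2 * c + 2 * c ^ 2) * real m ^ 2 / d)
    \<le> (\<Prod>x\<in>I. real ((d - m) choose n x)) * (c / d) ^ (m - 1) * (1 - c / d) ^ (d * card I + m ^ 2)"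
proof -
  define a where "a = 2 * real m ^ 2 / d"
  define b where "b = (2 * c ^ 2 + 2 * c) * real m ^ 2 / d"
  let ?G = "\<Prod>x\<in>I. c ^ n x / fact (n x)"
  have dm: "2 * m \<le> d" and dc: "2 * c \<le> d"
    using weight_less_imp_le[OF c m K] by auto
  have d0: "real d > 0"
    using c dc by linarith
  have sum_ab: "a + b = (2 + 2 * c + 2 * c ^ 2) * real m ^ 2 / d"
    using d0 by (simp add: a_def b_def field_simps)
  have ab: "0 \<le> a" "0 \<le> b" "a + b < 1"
    using c d0 K by (auto simp: a_def b_def sum_ab field_simps)
  have bern: "1 - a \<le> (1 - 2 * real m / d) ^ (m - 1)"
    unfolding a_def using dm d0 m by (intro one_minus_sq_le_power) auto
  have poisson: "(\<Prod>x\<in>I. pmf (poisson_pmf c) (n x)) = ?G * exp (- c) ^ card I"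
    using c by (rule prod_pmf_poisson)
  have "1 - (a + b) \<le> (1 - a) * (1 - b)"
    using mult_nonneg_nonneg[OF ab(1,2)] by (simp add: algebra_simps)
  then have "(\<Prod>x\<in>I. pmf (poisson_pmf c) (n x)) * (1 - (a + b))
      \<le> (\<Prod>x\<in>I. pmf (poisson_pmf c) (n x)) * ((1 - a) * (1 - b))"
    by (rule mult_left_mono) (simp add: prod_nonneg)
  also have "\<dots> = ((1 - a) * ?G) * (exp (- c) ^ card I * (1 - b))"
    by (simp add: poisson algebra_simps)
  also have "\<dots> \<le> ((\<Prod>x\<in>I. real ((d - m) choose n x)) * (c / d) ^ (m - 1)) *
      (1 - c / d) ^ (d * card I + m ^ 2)"
  proof (rule mult_mono)
    show "(1 - a) * ?G \<le> (\<Prod>x\<in>I. real ((d - m) choose n x)) * (c / d) ^ (m - 1)"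
      using bern prod_binomial_power_ge[OF less_imp_le[OF c] I(1,3) dm] c
      by (meson mult_right_mono order_trans prod_nonneg divide_nonneg_nonneg zero_le_power less_imp_le fact_ge_zero)
    show "exp (- c) ^ card I * (1 - b) \<le> (1 - c / d) ^ (d * card I + m ^ 2)"
      unfolding b_def by (rule one_minus_power_ge[OF c dc I(2)])
  qed (use ab c in \<open>auto intro!: mult_nonneg_nonneg prod_nonneg\<close>)
  finally show ?thesis
    by (simp add: sum_ab)
qed

section \<open>Total variation\<close>

lemma pmf_summable_on: "pmf p summable_on A"
  using abs_summable_equivalent pmf_abs_summable abs_summable_summable by blast

lemma infsum_pmf_UNIV: "(\<Sum>\<^sub>\<infinity>x. pmf p x) = 1"
proof -
  have "infsetsum (pmf p) UNIV = 1"
    by (rule infsetsum_pmf_eq_1) simp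
  then show ?thesis
    by (simp add: infsetsum_infsum[OF pmf_abs_summable])
qed

lemma dTV_le_one_minus_sum_min:
  assumes "finite \<Omega>"
  shows "dTV \<mu> \<nu> \<le> 1 - (\<Sum>\<omega>\<in>\<Omega>. min (pmf \<mu> \<omega>) (pmf \<nu> \<omega>))"
proof -
  let ?m = "\<lambda>\<omega>. min (pmf \<mu> \<omega>) (pmf \<nu> \<omega>)"
  have s\<mu>: "pmf \<mu> summable_on UNIV" and s\<nu>: "pmf \<nu> summable_on UNIV"
    by (rule pmf_summable_on)+
  have sm: "?m summable_on UNIV"
    by (rule abs_summable_summable, rule Infinite_Sum.abs_summable_on_comparison_test'[OF s\<mu>]) auto
  have "(\<lambda>\<omega>. \<bar>pmf \<mu> \<omega> - pmf \<nu> \<omega>\<bar>) = (\<lambda>\<omega>. (pmf \<mu> \<omega> + pmf \<nu> \<omega>) + (- 2) * ?m \<omega>)"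
    by (auto simp: min_def)
  then have "(\<Sum>\<^sub>\<infinity>\<omega>. \<bar>pmf \<mu> \<omega> - pmf \<nu> \<omega>\<bar>) = (\<Sum>\<^sub>\<infinity>\<omega>. (pmf \<mu> \<omega> + pmf \<nu> \<omega>) + (- 2) * ?m \<omega>)"
    by simp
  also have "\<dots> = (\<Sum>\<^sub>\<infinity>\<omega>. pmf \<mu> \<omega> + pmf \<nu> \<omega>) + (\<Sum>\<^sub>\<infinity>\<omega>. (- 2) * ?m \<omega>)"
    by (rule infsum_add)
      (use summable_on_add[OF s\<mu> s\<nu>] summable_on_cmult_right[OF sm, of "- 2"] in \<open>simp_all only:\<close>)
  also have "(\<Sum>\<^sub>\<infinity>\<omega>. (- 2) * ?m \<omega>) = (- 2) * (\<Sum>\<^sub>\<infinity>\<omega>. ?m \<omega>)"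
    by (rule infsum_cmult_right')
  also have "(\<Sum>\<^sub>\<infinity>\<omega>. pmf \<mu> \<omega> + pmf \<nu> \<omega>) = 2"
    using infsum_add[OF s\<mu> s\<nu>] by (simp add: infsum_pmf_UNIV)
  finally have total: "(\<Sum>\<^sub>\<infinity>\<omega>. \<bar>pmf \<mu> \<omega> - pmf \<nu> \<omega>\<bar>) = 2 - 2 * (\<Sum>\<^sub>\<infinity>\<omega>. ?m \<omega>)"
    by simp
  have "(\<Sum>\<omega>\<in>\<Omega>. ?m \<omega>) = infsum ?m \<Omega>"
    by (rule infsum_finite[symmetric, OF assms])
  also have "\<dots> \<le> (\<Sum>\<^sub>\<infinity>\<omega>. ?m \<omega>)"
    by (rule infsum_mono2) (use summable_on_finite[OF assms] sm in auto)
  finally have "(\<Sum>\<omega>\<in>\<Omega>. ?m \<omega>) \<le> (\<Sum>\<^sub>\<infinity>\<omega>. ?m \<omega>)" .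
  then show ?thesis
    unfolding dTV_def total by simp
qed

lemma dTV_map_pmf_le:
  fixes \<mu> :: "'b pmf" and \<nu> :: "'a pmf" and g :: "'a \<Rightarrow> 'b" and \<rho> :: "'a \<Rightarrow> real"
  assumes S: "finite S" and \<rho>: "\<And>W. W \<in> S \<Longrightarrow> \<rho> W \<le> 1"
    and mass: "\<And>\<omega>. \<omega> \<in> g ` S \<Longrightarrow> (\<Sum>W\<in>{W\<in>S. g W = \<omega>}. pmf \<nu> W * \<rho> W) \<le> pmf \<mu> \<omega>"
  shows "dTV \<mu> (map_pmf g \<nu>) \<le> 1 - (\<Sum>W\<in>S. pmf \<nu> W * \<rho> W)"
proof -
  have "(\<Sum>W\<in>{W\<in>S. g W = \<omega>}. pmf \<nu> W * \<rho> W) \<le> pmf (map_pmf g \<nu>) \<omega>" for \<omega>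
  proof -
    have "(\<Sum>W\<in>{W\<in>S. g W = \<omega>}. pmf \<nu> W * \<rho> W) \<le> (\<Sum>W\<in>{W\<in>S. g W = \<omega>}. pmf \<nu> W)"
      using \<rho> by (intro sum_mono) (auto intro: mult_left_le)
    also have "\<dots> = measure_pmf.prob \<nu> {W\<in>S. g W = \<omega>}"
      using S by (simp add: measure_measure_pmf_finite)
    also have "\<dots> \<le> measure_pmf.prob \<nu> (g -` {\<omega>})"
      by (rule measure_pmf.finite_measure_mono) auto
    finally show ?thesis
      by (simp add: pmf_map)
  qed
  then have "(\<Sum>W\<in>S. pmf \<nu> W * \<rho> W) \<le> (\<Sum>\<omega>\<in>g ` S. min (pmf \<mu> \<omega>) (pmf (map_pmf g \<nu>) \<omega>))"
    using mass S by (simp add: sum.image_gen[of S _ g] sum_mono)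
  moreover have "dTV \<mu> (map_pmf g \<nu>) \<le> 1 - (\<Sum>\<omega>\<in>g ` S. min (pmf \<mu> \<omega>) (pmf (map_pmf g \<nu>) \<omega>))"
    using S by (intro dTV_le_one_minus_sum_min) simp
  ultimately show ?thesis
    by linarith
qed

lemma pmf_gw_words_le_sum_prob_exploration:
  fixes c :: real and d :: nat and V :: "'a::linorder set"
  assumes c: "c > 0" and sg: "simple_graph V E" and reg: "regular V E d" and u: "u \<in> V"
    and W: "W \<in> set_pmf (gw_words c r)" and K: "(2 + 2 * c + 2 * c ^ 2) * real (card W) ^ 2 < d"
  shows "pmf (gw_words c r) W * (1 - (2 + 2 * c + 2 * c ^ 2) * real (card W) ^ 2 / d)
    \<le> (\<Sum>\<phi>\<in>ordered_embeddings V E u W.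
         measure_pmf.prob (percolation E (c / d)) {F. F \<inter> explored_edges E \<phi> W r = tree_edges \<phi> W})"
proof -
  have tree: "ulam_tree r W"
    using c W by (rule ulam_tree_gw_words)
  let ?I = "inner_nodes r W" and ?m = "card W" and ?p = "c / d"
  define LB where "LB = ?p ^ (?m - 1) * (1 - ?p) ^ (d * card ?I + ?m ^ 2)"
  have m: "1 \<le> ?m"
    using ulam_tree_finite[OF tree] ulam_tree_Nil[OF tree] by (metis One_nat_def Suc_leI card_gt_0_iff empty_iff)
  have "2 * c \<le> d"
    using weight_less_imp_le[OF c m K] by simp
  then have p: "0 \<le> ?p" "?p \<le> 1"
    using c by (auto simp: field_simps)
  have "card ?I \<le> ?m"
    using ulam_tree_finite[OF tree] by (intro card_mono) (auto simp: inner_nodes_def)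
  then have "pmf (gw_words c r) W * (1 - (2 + 2 * c + 2 * c ^ 2) * real ?m ^ 2 / d)
      \<le> (\<Prod>x\<in>?I. real ((d - ?m) choose n_children W x)) * ?p ^ (?m - 1) * (1 - ?p) ^ (d * card ?I + ?m ^ 2)"
    unfolding pmf_gw_words[OF c W] using finite_inner_nodes[OF tree] sum_n_children_inner_nodes[OF tree] m K
    by (intro poisson_prod_le_percolation_weight[OF c]) auto
  also have "\<dots> = (\<Prod>x\<in>?I. real ((d - ?m) choose n_children W x)) * LB"
    by (simp add: LB_def)
  also have "\<dots> \<le> real (card (ordered_embeddings V E u W)) * LB"
    using card_ordered_embeddings_ge[OF sg reg u tree] p unfolding LB_def
    by (intro mult_right_mono) (simp_all flip: of_nat_prod)
  also have "\<dots> = (\<Sum>\<phi>\<in>ordered_embeddings V E u W. LB)"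
    by simp
  also have "\<dots> \<le> (\<Sum>\<phi>\<in>ordered_embeddings V E u W.
      measure_pmf.prob (percolation E ?p) {F. F \<inter> explored_edges E \<phi> W r = tree_edges \<phi> W})"
    unfolding LB_def using prob_exploration_pattern_ge[OF sg reg tree _ p]
    by (intro sum_mono) (simp add: ordered_embeddings_def)
  finally show ?thesis .
qed

lemma exploration_pattern_unique:
  assumes "ulam_tree r W1" "ulam_tree r W2" "ordered_embedding V E u W1 \<phi>1" "ordered_embedding V E u W2 \<phi>2"
    and "F \<subseteq> E" "F \<inter> explored_edges E \<phi>1 W1 r = tree_edges \<phi>1 W1"
    "F \<inter> explored_edges E \<phi>2 W2 r = tree_edges \<phi>2 W2"
  shows "W1 = W2 \<and> \<phi>1 = \<phi>2"
proof (rule ordered_embedding_unique[OF assms(1-4)])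
  show "tree_edges \<phi>1 W1 = tree_edges \<phi>2 W2"
    using ball_eq_tree_image[OF assms(1,3,5,6)] ball_eq_tree_image[OF assms(2,4,5,7)] by simp
qed

lemma exploration_events_disjoint:
  fixes V :: "'a::linorder set"
  assumes trees: "\<And>W. W \<in> SW \<Longrightarrow> ulam_tree r W"
  shows "disjoint_family_on (\<lambda>(W, \<phi>). {F. F \<subseteq> E \<and> F \<inter> explored_edges E \<phi> W r = tree_edges \<phi> W})
    (SIGMA W:SW. ordered_embeddings V E u W)" (is "disjoint_family_on ?ev ?J")
  unfolding disjoint_family_on_def
proof (intro ballI impI)
  fix i j assume ij: "i \<in> ?J" "j \<in> ?J" "i \<noteq> j"
  obtain W1 \<phi>1 W2 \<phi>2 where i: "i = (W1, \<phi>1)" and j: "j = (W2, \<phi>2)"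
    by (cases i, cases j)
  show "?ev i \<inter> ?ev j = {}"
  proof (rule ccontr)
    assume "?ev i \<inter> ?ev j \<noteq> {}"
    then obtain F where "F \<subseteq> E"
        "F \<inter> explored_edges E \<phi>1 W1 r = tree_edges \<phi>1 W1" "F \<inter> explored_edges E \<phi>2 W2 r = tree_edges \<phi>2 W2"
      by (auto simp: i j)
    then have "W1 = W2 \<and> \<phi>1 = \<phi>2"
      using ij(1,2) trees by (intro exploration_pattern_unique) (auto simp: i j ordered_embeddings_def)
    then show False
      using ij(3) i j by simp
  qed
qed

text \<open>Each pair of a tree \<open>W\<close> and an ordered embedding of it has its own exploration event, on which
  the ball is isomorphic to \<open>W\<close>; distinct pairs give disjoint events.\<close>
lemma pmf_ball_class_ge:
  fixes c :: real and d :: nat and V :: "'a::linorder set"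
  assumes c: "c > 0" and sg: "simple_graph V E" and reg: "regular V E d" and u: "u \<in> V"
    and SW: "finite SW" "\<And>W. W \<in> SW \<Longrightarrow> W \<in> set_pmf (gw_words c r) \<and>
      (2 + 2 * c + 2 * c ^ 2) * real (card W) ^ 2 < d \<and> rclass (word_tree W) = \<omega>"
  shows "(\<Sum>W\<in>SW. pmf (gw_words c r) W * (1 - (2 + 2 * c + 2 * c ^ 2) * real (card W) ^ 2 / d))
    \<le> pmf (map_pmf (\<lambda>F. rclass (ball V F u r)) (percolation E (c / d))) \<omega>"
proof -
  let ?perc = "percolation E (c / d)"
  define J where "J = (SIGMA W:SW. ordered_embeddings V E u W)"
  define ev where "ev = (\<lambda>(W, \<phi>). {F. F \<subseteq> E \<and> F \<inter> explored_edges E \<phi> W r = tree_edges \<phi> W})"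
  have trees: "ulam_tree r W" if "W \<in> SW" for W
    using SW(2)[OF that] ulam_tree_gw_words[OF c] by blast
  have fin_emb: "finite (ordered_embeddings V E u W)" if "W \<in> SW" for W
    using sg ulam_tree_finite[OF trees[OF that]] by (intro finite_ordered_embeddings) (simp_all add: simple_graph_def)
  have "(\<Sum>W\<in>SW. pmf (gw_words c r) W * (1 - (2 + 2 * c + 2 * c ^ 2) * real (card W) ^ 2 / d))
      \<le> (\<Sum>W\<in>SW. \<Sum>\<phi>\<in>ordered_embeddings V E u W.
          measure_pmf.prob ?perc {F. F \<inter> explored_edges E \<phi> W r = tree_edges \<phi> W})"
    using SW(2) by (intro sum_mono pmf_gw_words_le_sum_prob_exploration[OF c sg reg u]) auto
  also have "\<dots> = (\<Sum>j\<in>J. measure_pmf.prob ?perc (ev j))"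
    unfolding J_def using SW(1) fin_emb
    by (subst sum.Sigma) (auto simp: ev_def prob_percolation_restrict split: prod.splits intro!: sum.cong)
  also have "\<dots> = measure_pmf.prob ?perc (\<Union>j\<in>J. ev j)"
    using SW(1) fin_emb exploration_events_disjoint[OF trees, of SW E V u] unfolding J_def ev_def
    by (intro measure_pmf.finite_measure_finite_Union[symmetric]) auto
  also have "\<dots> \<le> measure_pmf.prob ?perc ((\<lambda>F. rclass (ball V F u r)) -` {\<omega>})"
  proof (rule measure_pmf.finite_measure_mono)
    show "(\<Union>j\<in>J. ev j) \<subseteq> (\<lambda>F. rclass (ball V F u r)) -` {\<omega>}"
    proof (rule subsetI)
      fix F assume "F \<in> (\<Union>j\<in>J. ev j)"
      then obtain W \<phi> where W: "W \<in> SW" "ordered_embedding V E u W \<phi>" and F: "F \<subseteq> E"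
          "F \<inter> explored_edges E \<phi> W r = tree_edges \<phi> W"
        by (auto simp: ev_def J_def ordered_embeddings_def)
      then have "rclass (ball V F u r) = rclass (word_tree W)"
        by (intro rclass_ball_eq_word_tree[OF trees])
      then show "F \<in> (\<lambda>F. rclass (ball V F u r)) -` {\<omega>}"
        using SW(2) W by simp
    qed
  qed simp
  finally show ?thesis
    by (simp add: pmf_map)
qed

lemma real_sq_le_four_pow: "real n ^ 2 \<le> 4 ^ n"
proof -
  have "real n \<le> 2 ^ n"
    using less_exp[of n] by (metis less_imp_le of_nat_le_iff of_nat_numeral of_nat_power)
  then have "real n ^ 2 \<le> (2 ^ n) ^ 2"
    by (rule power_mono) simp
  also have "\<dots> = (2 * 2) ^ n"
    by (simp add: power2_eq_square flip: power_mult_distrib)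
  finally show ?thesis
    by simp
qed

lemma sum_pmf_sq_card_le:
  fixes \<nu> :: "'a set pmf"
  assumes S: "finite S" and C: "(\<integral>\<^sup>+W. ennreal (4 ^ card W) \<partial>measure_pmf \<nu>) = ennreal C" "C \<ge> 0"
  shows "(\<Sum>W\<in>S. pmf \<nu> W * real (card W) ^ 2) \<le> C"
proof -
  have "(\<integral>\<^sup>+W. ennreal (4 ^ card W * indicator S W) \<partial>measure_pmf \<nu>) =
      (\<Sum>W\<in>S. ennreal (4 ^ card W * indicator S W) * ennreal (pmf \<nu> W))"
    by (rule nn_integral_measure_pmf_support[OF S]) auto
  also have "\<dots> = ennreal (\<Sum>W\<in>S. pmf \<nu> W * 4 ^ card W)"
    by (subst sum_ennreal[symmetric]) (auto simp: ennreal_mult[symmetric] mult.commute intro!: sum.cong)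
  finally have "ennreal (\<Sum>W\<in>S. pmf \<nu> W * 4 ^ card W) =
      (\<integral>\<^sup>+W. ennreal (4 ^ card W * indicator S W) \<partial>measure_pmf \<nu>)"
    by simp
  also have "\<dots> \<le> ennreal C"
    unfolding C(1)[symmetric] by (intro nn_integral_mono) (auto simp: indicator_def)
  finally have "(\<Sum>W\<in>S. pmf \<nu> W * 4 ^ card W) \<le> C"
    using C(2) by (simp add: ennreal_le_iff)
  moreover have "(\<Sum>W\<in>S. pmf \<nu> W * real (card W) ^ 2) \<le> (\<Sum>W\<in>S. pmf \<nu> W * 4 ^ card W)"
    by (intro sum_mono mult_left_mono real_sq_le_four_pow) simp
  ultimately show ?thesis
    by linarith
qed

lemma prob_sq_card_ge_le:
  fixes \<nu> :: "'a set pmf" and K D :: real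
  assumes K: "K \<ge> 0" and D: "D > 0" and C: "(\<integral>\<^sup>+W. ennreal (4 ^ card W) \<partial>measure_pmf \<nu>) = ennreal C"
    and C0: "C \<ge> 0"
  shows "measure_pmf.prob \<nu> {W. D \<le> K * real (card W) ^ 2} \<le> K * C / D"
proof -
  let ?A = "{W. D \<le> K * real (card W) ^ 2}"
  have "indicator ?A W \<le> ennreal (K / D) * ennreal (4 ^ card W)" for W :: "'a set"
  proof (cases "W \<in> ?A")
    case True
    then have "1 \<le> K * real (card W) ^ 2 / D"
      using D by (simp add: field_simps)
    also have "\<dots> \<le> K / D * 4 ^ card W"
      using real_sq_le_four_pow[of "card W"] K D by (simp add: divide_right_mono mult_left_mono)
    finally show ?thesis
      using True K D by (simp add: ennreal_mult[symmetric] ennreal_leI)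
  qed simp
  then have "emeasure (measure_pmf \<nu>) ?A \<le> (\<integral>\<^sup>+W. ennreal (K / D) * ennreal (4 ^ card W) \<partial>measure_pmf \<nu>)"
    by (simp add: nn_integral_mono flip: nn_integral_indicator)
  also have "\<dots> = ennreal (K / D) * ennreal C"
    by (subst nn_integral_cmult) (simp_all add: C)
  also have "\<dots> = ennreal (K * C / D)"
    using K D C0 by (simp add: ennreal_mult[symmetric])
  finally show ?thesis
    using K D C0 by (simp add: measure_pmf.emeasure_eq_measure ennreal_le_iff)
qed

lemma sum_pmf_discounted_ge:
  fixes \<nu> :: "'a set pmf" and K D :: real
  assumes K: "K \<ge> 0" and D: "D > 0" and S: "finite S" "S = {W\<in>set_pmf \<nu>. K * real (card W) ^ 2 < D}"
    and C: "(\<integral>\<^sup>+W. ennreal (4 ^ card W) \<partial>measure_pmf \<nu>) = ennreal C" and C0: "C \<ge> 0"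
  shows "1 - 2 * K * C / D \<le> (\<Sum>W\<in>S. pmf \<nu> W * (1 - K * real (card W) ^ 2 / D))"
proof -
  have "measure_pmf.prob \<nu> (- S) \<le> measure_pmf.prob \<nu> {W. D \<le> K * real (card W) ^ 2}"
    using S(2) by (subst measure_Int_set_pmf[symmetric]) (auto intro!: measure_pmf.finite_measure_mono)
  then have mass: "1 - K * C / D \<le> (\<Sum>W\<in>S. pmf \<nu> W)"
    using prob_sq_card_ge_le[OF K D C C0] measure_pmf.prob_compl[of S \<nu>]
    by (simp add: measure_measure_pmf_finite[OF S(1)] Compl_eq_Diff_UNIV)
  have moment: "K / D * (\<Sum>W\<in>S. pmf \<nu> W * real (card W) ^ 2) \<le> K * C / D"
    using mult_left_mono[OF sum_pmf_sq_card_le[OF S(1) C C0], of "K / D"] K D by simp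
  have "1 - 2 * K * C / D = (1 - K * C / D) - K * C / D"
    using D by (simp add: field_simps)
  also have "\<dots> \<le> (\<Sum>W\<in>S. pmf \<nu> W) - K / D * (\<Sum>W\<in>S. pmf \<nu> W * real (card W) ^ 2)"
    using mass moment by (rule diff_mono)
  also have "\<dots> = (\<Sum>W\<in>S. pmf \<nu> W * (1 - K * real (card W) ^ 2 / D))"
    by (simp add: sum_subtractf sum_distrib_left algebra_simps)
  finally show ?thesis .
qed

lemma finite_gw_words_weight_less:
  fixes K :: real and d :: nat
  assumes c: "c > 0" and K: "1 \<le> K"
  shows "finite {W\<in>set_pmf (gw_words c r). K * real (card W) ^ 2 < d}"
proof (rule finite_subset[OF _ finite_gw_words_card_less[OF c]])
  show "{W\<in>set_pmf (gw_words c r). K * real (card W) ^ 2 < d} \<subseteq> {W\<in>set_pmf (gw_words c r). card W < d}"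
  proof safe
    fix W assume W: "K * real (card W) ^ 2 < d"
    have "real (card W) \<le> real (card W) ^ 2"
      using of_nat_mono[OF le_square[of "card W"]] by (simp add: power2_eq_square)
    also have "\<dots> \<le> K * real (card W) ^ 2"
      using K by (intro mult_right_mono[of 1 K, simplified]) auto
    also have "\<dots> < real d"
      by (rule W)
    finally show "card W < d"
      by simp
  qed
qed

lemma dTV_ball_GW_le:
  fixes c :: real and d :: nat and V :: "'a::linorder set"
  assumes c: "c > 0" and sg: "simple_graph V E" and reg: "regular V E d" and u: "u \<in> V" and d: "d > 0"
  shows "dTV (map_pmf (\<lambda>F. rclass (ball V F u r)) (percolation E (c / real d))) (map_pmf rclass (GW_trunc c r))
    \<le> 2 * (2 + 2 * c + 2 * c ^ 2) *
       enn2real (\<integral>\<^sup>+W. ennreal (4 ^ card W) \<partial>measure_pmf (gw_words c r)) / d"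
proof -
  define K where "K = 2 + 2 * c + 2 * c ^ 2"
  define C where "C = enn2real (\<integral>\<^sup>+W. ennreal (4 ^ card W) \<partial>measure_pmf (gw_words c r))"
  define S where "S = {W\<in>set_pmf (gw_words c r). K * real (card W) ^ 2 < d}"
  have K: "K \<ge> 2"
    using c by (simp add: K_def)
  have C: "(\<integral>\<^sup>+W. ennreal (4 ^ card W) \<partial>measure_pmf (gw_words c r)) = ennreal C" "C \<ge> 0"
    using gw_words_four_pow_card_finite[OF c] by (simp_all add: C_def ennreal_enn2real_if)
  have finS: "finite S"
    unfolding S_def using c K by (intro finite_gw_words_weight_less) auto
  then have finS': "finite {W\<in>S. P W}" for P
    by simp
  have "map_pmf rclass (GW_trunc c r) = map_pmf (\<lambda>W. rclass (word_tree W)) (gw_words c r)"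
    by (simp add: GW_trunc_def map_pmf_comp)
  moreover have "(\<Sum>W\<in>{W\<in>S. rclass (word_tree W) = \<omega>}. pmf (gw_words c r) W * (1 - K * real (card W) ^ 2 / d))
      \<le> pmf (map_pmf (\<lambda>F. rclass (ball V F u r)) (percolation E (c / d))) \<omega>" for \<omega>
    unfolding K_def using finS' by (intro pmf_ball_class_ge[OF c sg reg u]) (auto simp: S_def K_def)
  then have "dTV (map_pmf (\<lambda>F. rclass (ball V F u r)) (percolation E (c / d)))
      (map_pmf (\<lambda>W. rclass (word_tree W)) (gw_words c r))
    \<le> 1 - (\<Sum>W\<in>S. pmf (gw_words c r) W * (1 - K * real (card W) ^ 2 / d))"
    using K d by (intro dTV_map_pmf_le[OF finS]) auto
  moreover have "1 - 2 * K * C / d \<le> (\<Sum>W\<in>S. pmf (gw_words c r) W * (1 - K * real (card W) ^ 2 / d))"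
    using K d finS C by (intro sum_pmf_discounted_ge) (simp_all add: S_def)
  ultimately show ?thesis
    by (simp add: K_def C_def)
qed

lemma eventually_div_le_ln_power_mult_powr:
  fixes B :: real
  shows "\<forall>\<^sub>F d in sequentially. B / real d \<le> ln (real d) ^ r * real d powr (-1/2)"
  using eventually_ge_at_top[of "nat \<lceil>max 3 (B ^ 2)\<rceil>"]
proof eventually_elim
  case (elim d)
  then have d: "3 \<le> real d" "B ^ 2 \<le> real d"
    by linarith+
  have "B \<le> sqrt (real d)"
    using d(2) by (rule real_le_rsqrt)
  then have "B / real d \<le> sqrt (real d) / real d"
    using d by (intro divide_right_mono) auto
  also have "\<dots> = 1 / sqrt (real d)"
    using d by (simp add: field_simps)
  also have "\<dots> = real d powr (-1/2)"
    using d by (simp add: powr_minus_divide powr_half_sqrt)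
  also have "\<dots> \<le> ln (real d) ^ r * real d powr (-1/2)"
  proof -
    have "exp 1 \<le> real d"
      using exp_le d(1) by linarith
    then have "1 \<le> ln (real d)"
      using d by (simp add: ln_ge_iff)
    then show ?thesis
      using mult_right_mono[OF one_le_power, of "ln (real d)" "real d powr (-1/2)" r] by simp
  qed
  finally show ?case .
qed

theorem proposition3p4:
  fixes c :: real and V :: "nat \<Rightarrow> nat set" and E :: "nat \<Rightarrow> nat set set"
  assumes "c > 0"
    and "\<And>d. simple_graph (V d) (E d) \<and> regular (V d) (E d) d"
  shows "\<forall>r::nat. \<forall>\<^sub>F d in sequentially. \<forall>u\<in>V d.
     dTV (map_pmf (\<lambda>F. rclass (ball (V d) F u r)) (percolation (E d) (c / real d)))
         (map_pmf rclass (GW_trunc c r))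
       \<le> ln (real d) ^ r * real d powr (-1/2)"
proof
  fix r :: nat
  define B where "B = 2 * (2 + 2 * c + 2 * c ^ 2) *
    enn2real (\<integral>\<^sup>+W. ennreal (4 ^ card W) \<partial>measure_pmf (gw_words c r))"
  show "\<forall>\<^sub>F d in sequentially. \<forall>u\<in>V d.
     dTV (map_pmf (\<lambda>F. rclass (ball (V d) F u r)) (percolation (E d) (c / real d)))
         (map_pmf rclass (GW_trunc c r))
       \<le> ln (real d) ^ r * real d powr (-1/2)"
    using eventually_div_le_ln_power_mult_powr[of B r] eventually_gt_at_top[of 0]
  proof eventually_elim
    case (elim d)
    show ?case
      using order_trans[OF dTV_ball_GW_le[OF assms(1) _ _ _ elim(2)] elim(1)[unfolded B_def]] assms(2)
      by blast
  qed
qed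

end
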